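(* Fix $\tau>0$ and $\mu\in(0,1)$, and for each $N\in\mathbb N$ let $X^N$ be the continuous-time process on $\Omega_N$ defined in the context, with initial condition $X^N_j(0)=\mu N$ for all $j$. Define the rescaled process $$Y^N(t)=\begin{cases}\dfrac{X^N_{-\lfloor\tau N\rfloor}(N(t+\tau))}{N}, & t\in[-\tau,0),\\[2mm] \dfrac{X^N_0(Nt)}{N}, & t\ge 0.\end{cases}$$ Then for every $T>0$ the sequence of processes $\{Y^N(t):t\in[-\tau,T]\}_{N\ge1}$ converges in probability, in the Skorokhod topology of $D([-\tau,T],\mathbb R)$, to the unique continuous solution $u:[-\tau,T]\to\mathbb R$ of the delayed logistic (Hutchinson) equation $$u'(t)=\tfrac12\,u(t)\bigl(1-u(t-\tau)\bigr)\ \ (t>0),\qquad u(t)=\mu\ \ (t\in[-\tau,0]).$$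
   Context: Model. Fix $\tau>0$, $\mu\ge 0$, $N\in\mathbb N=\{1,2,\dots\}$, and write $L=\lfloor \tau N\rfloor$. The state space is $\Omega_N=[0,\infty)^{L+1}$, with elements $x=(x_{-L},\dots,x_{-1},x_0)$ ($x_0$ is the "present", $x_{-L}$ the state $L$ jumps in the past). Define maps $\theta_N^\pm:\Omega_N\to\Omega_N$ by $(\theta_N^\pm x)_j=x_{j+1}$ for $-L\le j<0$, and $(\theta_N^+x)_0=x_0(1+\frac1N)$, $(\theta_N^-x)_0=\max\{x_0(1-\frac{x_{-L}}{N^2}),0\}$. Let $\xi^N=(\xi^N(n))_{n\ge0}$ be the discrete-time Markov chain on $\Omega_N$ which from $x$ moves to $\theta_N^+x$ with probability $1/2$ and to $\theta_N^-x$ with probability $1/2$, started from $\xi^N_j(0)=\mu N$ for all $j\in\{-L,\dots,0\}$. Let $(\sigma_n)_{n\ge1}$ be i.i.d. exponential random variables of parameter $1$, independent of $\xi^N$, $J_0=0$, $J_n=\sigma_1+\dots+\sigma_n$, and $X^N(t)=\xi^N(n)$ for $t\in[J_n,J_{n+1})$. Thus $X^N=(X^N_{-L}(t),\dots,X^N_0(t))_{t\ge0}$ is a continuous-time Markov chain with generator $\mathsf L_Nf(x)=\frac12(f(\theta_N^+x)-f(x))+\frac12(f(\theta_N^-x)-f(x))$. *)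

theory Defs
  imports "HOL-Probability.Probability"
begin

definition L_of :: "real \<Rightarrow> nat \<Rightarrow> nat" where
  "L_of \<tau> N = nat \<lfloor>\<tau> * real N\<rfloor>"

text \<open>States x = (x_{-L},...,x_0) are represented as functions int => real;
  only indices -L..0 are meaningful.\<close>
definition theta_plus :: "nat \<Rightarrow> (int \<Rightarrow> real) \<Rightarrow> (int \<Rightarrow> real)" where
  "theta_plus N x = (\<lambda>j. if j < 0 then x (j + 1)
                         else if j = 0 then x 0 * (1 + 1 / real N) else 0)"

definition theta_minus :: "real \<Rightarrow> nat \<Rightarrow> (int \<Rightarrow> real) \<Rightarrow> (int \<Rightarrow> real)" where
  "theta_minus \<tau> N x = (\<lambda>j. if j < 0 then x (j + 1)
      else if j = 0 then max (x 0 * (1 - x (- int (L_of \<tau> N)) / (real N)^2)) 0 else 0)"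

text \<open>Sample space: for each step n a fair coin (fst) and an Exp(1) holding time (snd),
  all independent.\<close>
definition step_space :: "(bool \<times> real) measure" where
  "step_space = measure_pmf (bernoulli_pmf (1/2)) \<Otimes>\<^sub>M density lborel (exponential_density 1)"

definition hp_space :: "(nat \<Rightarrow> bool \<times> real) measure" where
  "hp_space = (\<Pi>\<^sub>M n\<in>(UNIV::nat set). step_space)"

primrec xi :: "real \<Rightarrow> real \<Rightarrow> nat \<Rightarrow> (nat \<Rightarrow> bool \<times> real) \<Rightarrow> nat \<Rightarrow> (int \<Rightarrow> real)" where
  "xi \<tau> \<mu> N \<omega> 0 = (\<lambda>j. \<mu> * real N)"
| "xi \<tau> \<mu> N \<omega> (Suc n) =
     (if fst (\<omega> n) then theta_plus N (xi \<tau> \<mu> N \<omega> n) else theta_minus \<tau> N (xi \<tau> \<mu> N \<omega> n))"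

definition jump_time :: "(nat \<Rightarrow> bool \<times> real) \<Rightarrow> nat \<Rightarrow> real" where
  "jump_time \<omega> n = (\<Sum>k<n. snd (\<omega> k))"

definition njumps :: "(nat \<Rightarrow> bool \<times> real) \<Rightarrow> real \<Rightarrow> nat" where
  "njumps \<omega> t = card {n. 0 < n \<and> jump_time \<omega> n \<le> t}"

definition Xproc :: "real \<Rightarrow> real \<Rightarrow> nat \<Rightarrow> (nat \<Rightarrow> bool \<times> real) \<Rightarrow> real \<Rightarrow> (int \<Rightarrow> real)" where
  "Xproc \<tau> \<mu> N \<omega> t = xi \<tau> \<mu> N \<omega> (njumps \<omega> t)"

definition Yproc :: "real \<Rightarrow> real \<Rightarrow> nat \<Rightarrow> (nat \<Rightarrow> bool \<times> real) \<Rightarrow> real \<Rightarrow> real" where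
  "Yproc \<tau> \<mu> N \<omega> t =
     (if t < 0 then Xproc \<tau> \<mu> N \<omega> (real N * (t + \<tau>)) (- int (L_of \<tau> N)) / real N
      else Xproc \<tau> \<mu> N \<omega> (real N * t) 0 / real N)"

definition skorokhod_dist :: "real \<Rightarrow> real \<Rightarrow> (real \<Rightarrow> real) \<Rightarrow> (real \<Rightarrow> real) \<Rightarrow> ereal" where
  "skorokhod_dist a b x y =
     (INF l \<in> {l. strict_mono_on {a..b} l \<and> continuous_on {a..b} l \<and> l ` {a..b} = {a..b}}.
        max (SUP t\<in>{a..b}. ereal \<bar>l t - t\<bar>) (SUP t\<in>{a..b}. ereal \<bar>x t - y (l t)\<bar>))"

definition hutchinson_sol :: "real \<Rightarrow> real \<Rightarrow> real \<Rightarrow> (real \<Rightarrow> real) \<Rightarrow> bool" where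
  "hutchinson_sol \<tau> \<mu> T u \<longleftrightarrow>
     continuous_on {-\<tau>..T} u \<and> (\<forall>t\<in>{-\<tau>..0}. u t = \<mu>) \<and>
     (\<forall>t\<in>{0<..T}. (u has_real_derivative (u t * (1 - u (t - \<tau>)) / 2)) (at t within {-\<tau>..T}))"

end

theory Submission
  imports Defs
begin

text \<open>
  The delayed equation is solved by the method of steps, and two solutions agree because on each
  step their difference solves a linear equation. For the chain, rescale the present coordinate,
  \<open>z\<^sub>k = \<xi>\<^sup>N\<^sub>0(k) / N\<close>, and let \<open>w\<^sub>k = z\<^sub>k\<^sub>-\<^sub>L\<close> be the delayed one. Up to the truncation at
  \<open>0\<close>, a step changes \<open>z\<^sub>k\<close> by the drift \<open>z\<^sub>k (1 - w\<^sub>k) / (2N)\<close> plus the fair increment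
  \<open>\<plusminus> z\<^sub>k (1 + w\<^sub>k) / (2N)\<close>. Comparing the drift with an Euler step of the solution \<open>u\<close>, and
  summing the fair increments by parts against the coin walk, a discrete Gronwall inequality gives
  \<open>|z\<^sub>k - u(k/N)| = O(1/N + \<delta>)\<close> up to \<open>k \<approx> (T + \<tau> + 1) N\<close>, on the event that the coin walk
  and the centred jump times \<open>J\<^sub>n - n\<close> stay within \<open>\<delta> N\<close> of \<open>0\<close>. On that event the number of
  jumps by time \<open>N t\<close> is within \<open>\<delta> N + 1\<close> of \<open>N t\<close>, so \<open>Y\<^sup>N\<close> is uniformly close to \<open>u\<close>, and the
  identity time change bounds the Skorokhod distance by the uniform one. Finally, Chebyshev's
  inequality at boundedly many grid times, together with the fact that both walks decrease by at
  most \<open>1\<close> per step, shows that the event fails with probability \<open>O(1/N)\<close>.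
\<close>

section \<open>The delayed logistic equation\<close>

lemma linear_ode_zero_unique:
  fixes y \<alpha> :: "real \<Rightarrow> real" and a b c :: real
  assumes "a \<le> b" and cont: "continuous_on {a..b} y" and "y a = 0"
    and deriv: "\<And>s. a < s \<Longrightarrow> s < b \<Longrightarrow> (y has_real_derivative \<alpha> s * y s) (at s)"
    and le: "\<And>s. a < s \<Longrightarrow> s < b \<Longrightarrow> \<alpha> s \<le> c"
  shows "y b = 0"
proof -
  define h where "h s = (y s)\<^sup>2 * exp (- 2 * c * s)" for s
  have "h b \<le> h a"
  proof (rule DERIV_nonpos_imp_decreasing_open[OF \<open>a \<le> b\<close>])
    show "continuous_on {a..b} h"
      unfolding h_def by (intro continuous_intros cont)
    fix s assume s: "a < s" "s < b"
    \<comment> \<open>the weight \<open>exp (- 2 c s)\<close> turns \<open>\<alpha> \<le> c\<close> into a nonpositive derivative of \<open>h\<close>\<close>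
    have "(h has_real_derivative 2 * (y s)\<^sup>2 * exp (- 2 * c * s) * (\<alpha> s - c)) (at s)"
      unfolding h_def
      by (auto intro!: derivative_eq_intros deriv[OF s] simp: algebra_simps power2_eq_square)
    moreover have "2 * (y s)\<^sup>2 * exp (- 2 * c * s) * (\<alpha> s - c) \<le> 0"
      using le[OF s] by (intro mult_nonneg_nonpos) auto
    ultimately show "\<exists>d. (h has_real_derivative d) (at s) \<and> d \<le> 0" by blast
  qed
  then show ?thesis
    using \<open>y a = 0\<close> by (simp add: h_def mult_le_0_iff)
qed

lemma mvt_linearization_bound:
  fixes f f' :: "real \<Rightarrow> real" and a b c K :: real
  assumes "a \<le> b" and cont: "continuous_on {a..b} f"
    and deriv: "\<And>x. a < x \<Longrightarrow> x < b \<Longrightarrow> (f has_real_derivative f' x) (at x)"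
    and bound: "\<And>x. a < x \<Longrightarrow> x < b \<Longrightarrow> \<bar>f' x - c\<bar> \<le> K"
  shows "\<bar>f b - f a - (b - a) * c\<bar> \<le> K * (b - a)"
proof (cases "a = b")
  case False
  then have "a < b" using \<open>a \<le> b\<close> by simp
  have "f differentiable (at x)" if "a < x" "x < b" for x
    using deriv[OF that] real_differentiable_def by blast
  then obtain d z where z: "a < z" "z < b" "(f has_real_derivative d) (at z)"
    and mvt: "f b - f a = (b - a) * d"
    using MVT[OF \<open>a < b\<close> cont] by blast
  have "d = f' z" using DERIV_unique[OF z(3) deriv[OF z(1,2)]] .
  then have "\<bar>f b - f a - (b - a) * c\<bar> = (b - a) * \<bar>f' z - c\<bar>"
    using \<open>a < b\<close> by (simp add: mvt abs_mult right_diff_distrib[symmetric])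
  also have "\<dots> \<le> (b - a) * K"
    using \<open>a < b\<close> bound[OF z(1,2)] by (intro mult_left_mono) auto
  finally show ?thesis by (simp add: mult.commute)
qed simp

locale hutchinson_solution =
  fixes \<tau> \<mu> Tm :: real and u :: "real \<Rightarrow> real"
  assumes tau_pos: "\<tau> > 0"
    and u_nonpos: "\<And>t. t \<le> 0 \<Longrightarrow> u t = \<mu>"
    and u_cont: "continuous_on UNIV u"
    and u_deriv: "\<And>t. 0 < t \<Longrightarrow> t < Tm \<Longrightarrow>
      (u has_real_derivative u t * (1 - u (t - \<tau>)) / 2) (at t)"
begin

lemma hutchinson_sol: "0 < T \<Longrightarrow> T < Tm \<Longrightarrow> hutchinson_sol \<tau> \<mu> T u"
  unfolding hutchinson_sol_def using u_cont u_nonpos u_deriv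
  by (auto intro: continuous_on_subset has_field_derivative_at_within)

lemma hutchinson_sol_agree_next_step:
  assumes "T < Tm" and v: "hutchinson_sol \<tau> \<mu> T v" and "0 \<le> a"
    and agree: "\<forall>s\<in>{-\<tau>..T}. s \<le> a \<longrightarrow> v s = u s"
    and t: "t \<in> {-\<tau>..T}" "a \<le> t" "t \<le> a + \<tau>"
  shows "v t = u t"
proof -
  have v_cont: "continuous_on {-\<tau>..T} v"
    and v_deriv: "\<And>s. s \<in> {0<..T} \<Longrightarrow>
      (v has_real_derivative (v s * (1 - v (s - \<tau>)) / 2)) (at s within {-\<tau>..T})"
    using v unfolding hutchinson_sol_def by auto
  obtain M where M: "\<And>s. s \<in> {a - \<tau>..t - \<tau>} \<Longrightarrow> norm (u s) \<le> M"
    using continuous_on_compact_bound[OF compact_Icc continuous_on_subset[OF u_cont subset_UNIV]]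
    by blast
  \<comment> \<open>the delayed terms of \<open>v\<close> and \<open>u\<close> agree on \<open>[a, t]\<close>, so \<open>v - u\<close> solves a linear equation\<close>
  have "(\<lambda>s. v s - u s) t = 0"
  proof (rule linear_ode_zero_unique[where y = "\<lambda>s. v s - u s" and a = a and b = t
        and \<alpha> = "\<lambda>s. (1 - u (s - \<tau>)) / 2" and c = "(1 + M) / 2"])
    show "a \<le> t" using t by simp
    show "continuous_on {a..t} (\<lambda>s. v s - u s)"
      using \<open>0 \<le> a\<close> t tau_pos
      by (intro continuous_intros continuous_on_subset[OF v_cont]
          continuous_on_subset[OF u_cont]) auto
    have "a \<in> {-\<tau>..T}" using \<open>0 \<le> a\<close> t tau_pos by auto
    then show "v a - u a = 0" using agree by simp
    fix s assume s: "a < s" "s < t"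
    have "t \<le> T" using t(1) by simp
    then have "0 < s" "s < T" "s < Tm" using s \<open>0 \<le> a\<close> \<open>T < Tm\<close> by linarith+
    have "at s within {-\<tau>..T} = at s"
      using \<open>0 < s\<close> \<open>s < T\<close> tau_pos by (intro at_within_interior) auto
    then have dv: "(v has_real_derivative v s * (1 - v (s - \<tau>)) / 2) (at s)"
      using v_deriv[of s] \<open>0 < s\<close> \<open>s < T\<close> by simp
    have "s - \<tau> \<in> {-\<tau>..T}" "s - \<tau> \<le> a" using s t \<open>0 < s\<close> by auto
    then have "v (s - \<tau>) = u (s - \<tau>)" using agree by blast
    then have eq: "v s * (1 - v (s - \<tau>)) / 2 - u s * (1 - u (s - \<tau>)) / 2
        = (1 - u (s - \<tau>)) / 2 * (v s - u s)"
      by (simp add: field_simps)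
    show "((\<lambda>s. v s - u s) has_real_derivative (1 - u (s - \<tau>)) / 2 * (v s - u s)) (at s)"
      using DERIV_diff[OF dv u_deriv[OF \<open>0 < s\<close> \<open>s < Tm\<close>]] unfolding eq .
    have "norm (u (s - \<tau>)) \<le> M" by (rule M) (use s in simp)
    then have "- u (s - \<tau>) \<le> M" unfolding real_norm_def by (rule abs_le_D2)
    then show "(1 - u (s - \<tau>)) / 2 \<le> (1 + M) / 2" by (intro divide_right_mono) auto
  qed
  then show ?thesis by simp
qed

lemma hutchinson_sol_unique:
  assumes "T < Tm" and v: "hutchinson_sol \<tau> \<mu> T v"
  shows "\<forall>t\<in>{-\<tau>..T}. v t = u t"
proof -
  have "\<forall>t\<in>{-\<tau>..T}. t \<le> real k * \<tau> \<longrightarrow> v t = u t" for k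
  proof (induction k)
    case 0
    then show ?case using v u_nonpos by (auto simp: hutchinson_sol_def)
  next
    case (Suc k)
    show ?case
    proof (intro ballI impI)
      fix t assume "t \<in> {-\<tau>..T}" "t \<le> real (Suc k) * \<tau>"
      then show "v t = u t"
        using Suc.IH hutchinson_sol_agree_next_step[OF assms, of "real k * \<tau>" t] tau_pos
        by (cases "t \<le> real k * \<tau>") (auto simp: algebra_simps)
    qed
  qed
  moreover have "\<exists>k. t \<le> real k * \<tau>" for t
  proof -
    obtain k where "t / \<tau> \<le> real k" using real_arch_simple by blast
    then show ?thesis using tau_pos by (auto simp: divide_le_eq)
  qed
  ultimately show ?thesis by blast
qed

lemma bounded_up_to: "\<exists>B\<ge>1. \<forall>t\<le>T1. \<bar>u t\<bar> \<le> B"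
proof -
  obtain M where M: "\<And>t. t \<in> {0..T1} \<Longrightarrow> norm (u t) \<le> M"
    using continuous_on_compact_bound[OF compact_Icc continuous_on_subset[OF u_cont subset_UNIV]]
    by blast
  have "\<bar>u t\<bar> \<le> max 1 (max \<bar>\<mu>\<bar> M)" if "t \<le> T1" for t
    using M[of t] that u_nonpos[of t] by (cases "t \<le> 0") auto
  then show ?thesis by (intro exI[of _ "max 1 (max \<bar>\<mu>\<bar> M)"]) auto
qed

context
  fixes T1 B :: real
  assumes T1_lt: "T1 < Tm" and B_nonneg: "B \<ge> 0" and u_bound: "\<And>t. t \<le> T1 \<Longrightarrow> \<bar>u t\<bar> \<le> B"
begin

lemma lipschitz_bound:
  assumes "s \<le> T1" "t \<le> T1"
  shows "\<bar>u t - u s\<bar> \<le> B * (1 + B) / 2 * \<bar>t - s\<bar>"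
proof -
  have *: "\<bar>u t - u s\<bar> \<le> B * (1 + B) / 2 * (t - s)" if "s \<le> t" "t \<le> T1" for s t
  proof (cases "t \<le> 0")
    case True
    then show ?thesis using that B_nonneg by (simp add: u_nonpos)
  next
    case False
    \<comment> \<open>\<open>u\<close> is constant up to \<open>0\<close>, but solves the equation only on \<open>(0, Tm)\<close>\<close>
    define s' where "s' = max 0 s"
    have "\<bar>u t - u s' - (t - s') * 0\<bar> \<le> B * (1 + B) / 2 * (t - s')"
    proof (rule mvt_linearization_bound[OF _ continuous_on_subset[OF u_cont]])
      fix x assume x: "s' < x" "x < t"
      then show "(u has_real_derivative u x * (1 - u (x - \<tau>)) / 2) (at x)"
        using that T1_lt by (intro u_deriv) (auto simp: s'_def)
      have "\<bar>u x\<bar> \<le> B" "\<bar>u (x - \<tau>)\<bar> \<le> B"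
        using x that tau_pos by (auto intro!: u_bound simp: s'_def)
      then have "\<bar>u x\<bar> * \<bar>1 - u (x - \<tau>)\<bar> \<le> B * (1 + B)"
        by (intro mult_mono) auto
      then show "\<bar>u x * (1 - u (x - \<tau>)) / 2 - 0\<bar> \<le> B * (1 + B) / 2"
        by (simp add: abs_mult)
    qed (use False that in \<open>auto simp: s'_def\<close>)
    moreover have "u s' = u s" using u_nonpos[of s] u_nonpos[of 0] by (auto simp: s'_def max_def)
    moreover have "B * (1 + B) / 2 * (t - s') \<le> B * (1 + B) / 2 * (t - s)"
      using B_nonneg by (intro mult_left_mono) (auto simp: s'_def)
    ultimately show ?thesis by simp
  qed
  show ?thesis
    using *[of s t] *[of t s] assms by (cases "s \<le> t") (auto simp: abs_minus_commute)
qed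

lemma rhs_lipschitz_bound:
  assumes "s \<le> T1" "t \<le> T1"
  shows "\<bar>u s * (1 - u (s - \<tau>)) - u t * (1 - u (t - \<tau>))\<bar>
    \<le> B * (1 + B) / 2 * (1 + 2 * B) * \<bar>s - t\<bar>"
proof -
  define \<Lambda> where "\<Lambda> = B * (1 + B) / 2"
  have "u s * (1 - u (s - \<tau>)) - u t * (1 - u (t - \<tau>))
      = (u s - u t) * (1 - u (s - \<tau>)) + u t * (u (t - \<tau>) - u (s - \<tau>))"
    by (simp add: algebra_simps)
  then have "\<bar>u s * (1 - u (s - \<tau>)) - u t * (1 - u (t - \<tau>))\<bar>
      \<le> \<bar>u s - u t\<bar> * \<bar>1 - u (s - \<tau>)\<bar> + \<bar>u t\<bar> * \<bar>u (t - \<tau>) - u (s - \<tau>)\<bar>"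
    by (metis abs_mult abs_triangle_ineq)
  also have "\<dots> \<le> \<Lambda> * \<bar>s - t\<bar> * (1 + B) + B * (\<Lambda> * \<bar>s - t\<bar>)"
  proof (intro add_mono mult_mono)
    show "\<bar>u s - u t\<bar> \<le> \<Lambda> * \<bar>s - t\<bar>"
      unfolding \<Lambda>_def by (rule lipschitz_bound[OF assms(2,1)])
    show "\<bar>u (t - \<tau>) - u (s - \<tau>)\<bar> \<le> \<Lambda> * \<bar>s - t\<bar>"
      using lipschitz_bound[of "s - \<tau>" "t - \<tau>"] assms tau_pos by (simp add: \<Lambda>_def abs_minus_commute)
  qed (use u_bound[of "s - \<tau>"] u_bound[of t] assms tau_pos B_nonneg in \<open>auto simp: \<Lambda>_def\<close>)
  also have "\<dots> = \<Lambda> * (1 + 2 * B) * \<bar>s - t\<bar>" by (simp add: algebra_simps)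
  finally show ?thesis by (simp add: \<Lambda>_def)
qed

lemma euler_step_bound:
  assumes "0 \<le> t" "0 \<le> h" "t + h \<le> T1"
  shows "\<bar>u (t + h) - u t - h * (u t * (1 - u (t - \<tau>)) / 2)\<bar>
    \<le> B * (1 + B) / 2 * (1 + 2 * B) / 2 * h\<^sup>2"
proof -
  have "\<bar>u (t + h) - u t - (t + h - t) * (u t * (1 - u (t - \<tau>)) / 2)\<bar>
      \<le> B * (1 + B) / 2 * (1 + 2 * B) / 2 * h * (t + h - t)"
  proof (rule mvt_linearization_bound)
    show "continuous_on {t..t + h} u" using u_cont by (rule continuous_on_subset) simp
    fix z assume z: "t < z" "z < t + h"
    show "(u has_real_derivative u z * (1 - u (z - \<tau>)) / 2) (at z)"
      using z assms T1_lt by (intro u_deriv) auto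
    have "\<bar>u z * (1 - u (z - \<tau>)) - u t * (1 - u (t - \<tau>))\<bar>
        \<le> B * (1 + B) / 2 * (1 + 2 * B) * \<bar>z - t\<bar>"
      by (rule rhs_lipschitz_bound) (use z assms in auto)
    also have "\<dots> \<le> B * (1 + B) / 2 * (1 + 2 * B) * h"
      using z B_nonneg by (intro mult_left_mono) auto
    finally show "\<bar>u z * (1 - u (z - \<tau>)) / 2 - u t * (1 - u (t - \<tau>)) / 2\<bar>
        \<le> B * (1 + B) / 2 * (1 + 2 * B) / 2 * h"
      by (simp add: diff_divide_distrib[symmetric])
  qed (use assms in auto)
  then show ?thesis by (simp add: power2_eq_square mult.assoc)
qed
end

end

text \<open>Method of steps: on \<open>(0, (k + 1) \<tau>)\<close> the delayed argument stays below \<open>k \<tau>\<close>, where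
  iterates \<open>k\<close> and \<open>k + 1\<close> agree, so iterate \<open>k + 1\<close> solves the equation there.\<close>
fun hutchinson_steps :: "real \<Rightarrow> real \<Rightarrow> nat \<Rightarrow> real \<Rightarrow> real" where
  "hutchinson_steps \<tau> \<mu> 0 = (\<lambda>t. \<mu>)"
| "hutchinson_steps \<tau> \<mu> (Suc k) =
     (\<lambda>t. \<mu> * exp (integral {0..max 0 t} (\<lambda>s. (1 - hutchinson_steps \<tau> \<mu> k (s - \<tau>)) / 2)))"

lemma continuous_on_hutchinson_steps: "continuous_on UNIV (hutchinson_steps \<tau> \<mu> k)"
proof (induction k)
  case (Suc k)
  define g where "g = (\<lambda>s. (1 - hutchinson_steps \<tau> \<mu> k (s - \<tau>)) / 2)"
  have g_cont: "continuous_on UNIV g"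
    unfolding g_def by (intro continuous_intros continuous_on_compose2[OF Suc]) auto
  have "isCont (\<lambda>t. integral {0..max 0 t} g) x" for x
  proof -
    define b where "b = \<bar>x\<bar> + 1"
    have "continuous_on {0..b} (\<lambda>t. integral {0..t} g)"
      by (intro indefinite_integral_continuous_1 integrable_continuous_interval
          continuous_on_subset[OF g_cont]) auto
    then have "continuous_on {-b..b} (\<lambda>t. integral {0..max 0 t} g)"
      by (rule continuous_on_compose2[where f = "\<lambda>t. max 0 t"])
        (auto intro!: continuous_intros simp: b_def)
    then show ?thesis
      by (rule continuous_on_interior) (auto simp: b_def)
  qed
  then show ?case
    unfolding hutchinson_steps.simps g_def[symmetric]
    by (intro continuous_intros) (simp add: continuous_on_eq_continuous_at)
qed simp

lemma hutchinson_steps_nonpos: "t \<le> 0 \<Longrightarrow> hutchinson_steps \<tau> \<mu> k t = \<mu>"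
  by (cases k) auto

lemma hutchinson_steps_Suc_eq:
  "\<tau> > 0 \<Longrightarrow> t \<le> real k * \<tau> \<Longrightarrow> hutchinson_steps \<tau> \<mu> (Suc k) t = hutchinson_steps \<tau> \<mu> k t"
proof (induction k arbitrary: t)
  case (Suc k)
  have "integral {0..t} (\<lambda>s. (1 - hutchinson_steps \<tau> \<mu> (Suc k) (s - \<tau>)) / 2)
      = integral {0..t} (\<lambda>s. (1 - hutchinson_steps \<tau> \<mu> k (s - \<tau>)) / 2)"
    using Suc by (intro integral_cong) (auto simp: algebra_simps)
  then show ?case
    by (cases "t \<le> 0") (simp_all add: hutchinson_steps_nonpos max_def)
qed simp

lemma hutchinson_solution_exists:
  fixes \<tau> \<mu> Tm :: real
  assumes "\<tau> > 0"
  shows "\<exists>u. hutchinson_solution \<tau> \<mu> Tm u"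
proof -
  obtain k where k: "Tm \<le> real k * \<tau>"
    using real_arch_simple[of "Tm / \<tau>"] assms by (auto simp: divide_le_eq)
  define u where "u = hutchinson_steps \<tau> \<mu> (Suc k)"
  define g where "g = (\<lambda>s. (1 - hutchinson_steps \<tau> \<mu> k (s - \<tau>)) / 2)"
  have g_cont: "continuous_on UNIV g"
    unfolding g_def
    by (intro continuous_intros continuous_on_compose2[OF continuous_on_hutchinson_steps]) auto
  have "(u has_real_derivative u t * (1 - u (t - \<tau>)) / 2) (at t)" if t: "0 < t" "t < Tm" for t
  proof -
    have "((\<lambda>t. integral {0..t} g) has_real_derivative g t) (at t within {0..t+1})"
      by (rule integral_has_real_derivative) (use t continuous_on_subset[OF g_cont] in auto)
    then have "((\<lambda>t. integral {0..t} g) has_real_derivative g t) (at t)"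
      using t by (subst (asm) at_within_interior) auto
    then have "((\<lambda>t. \<mu> * exp (integral {0..t} g)) has_real_derivative
        \<mu> * (exp (integral {0..t} g) * g t)) (at t)"
      by (intro DERIV_cmult DERIV_chain2[OF DERIV_exp])
    then have "(u has_real_derivative \<mu> * (exp (integral {0..t} g) * g t)) (at t)"
      by (rule has_field_derivative_transform_within_open[of _ _ _ "{0<..}"])
        (use t in \<open>auto simp: u_def g_def max_def\<close>)
    moreover have "u (t - \<tau>) = hutchinson_steps \<tau> \<mu> k (t - \<tau>)"
      unfolding u_def by (rule hutchinson_steps_Suc_eq) (use assms t k in auto)
    ultimately show ?thesis
      using t by (simp add: u_def g_def max_def mult.assoc)
  qed
  moreover have "continuous_on UNIV u" "\<And>t. t \<le> 0 \<Longrightarrow> u t = \<mu>"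
    unfolding u_def by (rule continuous_on_hutchinson_steps, rule hutchinson_steps_nonpos)
  ultimately have "hutchinson_solution \<tau> \<mu> Tm u"
    using assms by unfold_locales auto
  then show ?thesis by blast
qed

locale solution_estimates =
  fixes \<mu> \<tau> :: real and u :: "real \<Rightarrow> real" and B \<Lambda> K T1 :: real
  assumes tau_pos: "\<tau> > 0"
    and u_nonpos: "\<And>t. t \<le> 0 \<Longrightarrow> u t = \<mu>"
    and u_bound: "\<And>t. t \<le> T1 \<Longrightarrow> \<bar>u t\<bar> \<le> B"
    and u_lipschitz: "\<And>s t. s \<le> T1 \<Longrightarrow> t \<le> T1 \<Longrightarrow> \<bar>u t - u s\<bar> \<le> \<Lambda> * \<bar>t - s\<bar>"
    and u_euler: "\<And>t h. 0 \<le> t \<Longrightarrow> 0 \<le> h \<Longrightarrow> t + h \<le> T1 \<Longrightarrow>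
      \<bar>u (t + h) - u t - h * (u t * (1 - u (t - \<tau>)) / 2)\<bar> \<le> K * h\<^sup>2"
    and B_ge: "B \<ge> 1" and Lambda_nonneg: "\<Lambda> \<ge> 0" and K_nonneg: "K \<ge> 0"
    and T1_nonneg: "T1 \<ge> 0"
begin

lemma mu_le: "\<mu> \<le> B"
  using u_bound[of 0] u_nonpos[of 0] T1_nonneg by simp

lemma u_lipschitz_grid:
  fixes j N :: nat and \<delta> t :: real
  assumes "real N > 0" "real j \<le> T1 * real N" "t \<le> T1"
    and close: "\<bar>real j - real N * t\<bar> \<le> \<delta> * real N + 2"
  shows "\<bar>u (real j / real N) - u t\<bar> \<le> \<Lambda> * (\<delta> + 2 / real N)"
proof -
  have "real j / real N - t = (real j - real N * t) / real N"
    using assms by (simp add: field_simps)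
  then have "\<bar>real j / real N - t\<bar> = \<bar>real j - real N * t\<bar> / real N"
    using assms by (simp add: abs_divide)
  also have "\<dots> \<le> \<delta> + 2 / real N"
    using close assms by (simp add: field_simps)
  finally have gap: "\<bar>real j / real N - t\<bar> \<le> \<delta> + 2 / real N" .
  have "real j / real N \<le> T1" using assms by (simp add: divide_le_eq)
  then have "\<bar>u (real j / real N) - u t\<bar> \<le> \<Lambda> * \<bar>real j / real N - t\<bar>"
    using assms by (intro u_lipschitz)
  also have "\<dots> \<le> \<Lambda> * (\<delta> + 2 / real N)" by (rule mult_left_mono[OF gap Lambda_nonneg])
  finally show ?thesis .
qed

end

lemma (in hutchinson_solution) solution_estimates_exist:
  assumes "0 \<le> T1" "T1 < Tm"
  shows "\<exists>B \<Lambda> K. solution_estimates \<mu> \<tau> u B \<Lambda> K T1"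
proof -
  obtain B where "B \<ge> 1" and bound: "\<And>t. t \<le> T1 \<Longrightarrow> \<bar>u t\<bar> \<le> B"
    using bounded_up_to by blast
  then have "solution_estimates \<mu> \<tau> u B (B * (1 + B) / 2) (B * (1 + B) / 2 * (1 + 2 * B) / 2) T1"
    using assms tau_pos u_nonpos lipschitz_bound[OF \<open>T1 < Tm\<close> _ bound] euler_step_bound[OF \<open>T1 < Tm\<close> _ bound]
    by unfold_locales auto
  then show ?thesis by blast
qed

section \<open>Fluid limit of the embedded chain\<close>

lemma sum_by_parts:
  fixes e c :: "nat \<Rightarrow> 'a::comm_ring"
  shows "(\<Sum>k<Suc n. e k * c k)
    = (\<Sum>j<Suc n. e j) * c n - (\<Sum>k<n. (\<Sum>j<Suc k. e j) * (c (Suc k) - c k))"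
  by (induction n) (simp_all add: algebra_simps)

lemma abs_sum_by_parts_le:
  fixes e c :: "nat \<Rightarrow> real" and s C d :: real
  assumes partial: "\<And>k. k \<le> Suc n \<Longrightarrow> \<bar>\<Sum>j<k. e j\<bar> \<le> s"
    and last: "\<bar>c n\<bar> \<le> C" and incr: "\<And>k. k < n \<Longrightarrow> \<bar>c (Suc k) - c k\<bar> \<le> d"
  shows "\<bar>\<Sum>k<Suc n. e k * c k\<bar> \<le> s * (C + real n * d)"
proof -
  have "0 \<le> s" using partial[of 0] by simp
  have "\<bar>\<Sum>k<Suc n. e k * c k\<bar>
      \<le> \<bar>\<Sum>j<Suc n. e j\<bar> * \<bar>c n\<bar> + (\<Sum>k<n. \<bar>\<Sum>j<Suc k. e j\<bar> * \<bar>c (Suc k) - c k\<bar>)"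
    unfolding sum_by_parts
    by (rule order_trans[OF abs_triangle_ineq4 add_mono])
      (simp_all add: abs_mult order_trans[OF sum_abs])
  also have "\<dots> \<le> s * C + (\<Sum>k<n. s * d)"
    using partial last incr \<open>0 \<le> s\<close>
    by (intro add_mono sum_mono mult_mono) (auto simp del: sum.lessThan_Suc)
  finally show ?thesis by (simp add: algebra_simps)
qed

lemma discrete_gronwall:
  fixes e :: "nat \<Rightarrow> real" and c \<rho> :: real
  assumes "0 \<le> c" and init: "\<bar>e 0\<bar> \<le> \<rho>"
    and step: "\<And>n. n < M \<Longrightarrow> (\<And>j. j \<le> n \<Longrightarrow> \<bar>e j\<bar> \<le> \<rho> * (1 + c) ^ j) \<Longrightarrow>
      \<bar>e (Suc n)\<bar> \<le> \<rho> + (\<Sum>k\<le>n. c * (\<rho> * (1 + c) ^ k))"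
  shows "n \<le> M \<Longrightarrow> \<bar>e n\<bar> \<le> \<rho> * (1 + c) ^ n"
proof (induction n rule: less_induct)
  case (less n)
  show ?case
  proof (cases n)
    case 0
    then show ?thesis using init by simp
  next
    case (Suc m)
    have "\<rho> + (\<Sum>k\<le>m. c * (\<rho> * (1 + c) ^ k)) = \<rho> * (1 + c) ^ Suc m"
      by (induction m) (simp_all add: algebra_simps)
    then show ?thesis
      using step[of m] less Suc by simp
  qed
qed

text \<open>\<open>z k\<close> and \<open>w k\<close> are the present and the delayed coordinate of \<open>\<xi>\<^sup>N(k) / N\<close>,
  and \<open>b k\<close> is the \<open>k\<close>-th coin.\<close>
locale coupled_chain = solution_estimates +
  fixes N L :: nat and b :: "nat \<Rightarrow> bool" and z w :: "nat \<Rightarrow> real"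
  assumes mu_pos: "\<mu> > 0"
    and z_0: "z 0 = \<mu>"
    and w_eq: "\<And>k. w k = (if L \<le> k then z (k - L) else \<mu>)"
    and z_Suc: "\<And>k. z (Suc k) =
      (if b k then z k * (1 + 1 / real N) else max (z k * (1 - w k / real N)) 0)"
    and L_le: "real L \<le> \<tau> * real N" and L_gt: "\<tau> * real N < real L + 1"
    and N_ge: "B + 1 \<le> real N"
begin

abbreviation "coin j \<equiv> (if b j then 1 else -1 :: real)"
abbreviation "err j \<equiv> z j - u (real j / real N)"
abbreviation "noise k \<equiv> z k * (1 + w k)"
abbreviation "drift_gap k \<equiv> z k * (1 - w k) - u (real k / real N) * (1 - u (real k / real N - \<tau>))"
abbreviation "euler_defect k \<equiv> u (real (Suc k) / real N) - u (real k / real N)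
  - u (real k / real N) * (1 - u (real k / real N - \<tau>)) / (2 * real N)"

lemma N_pos: "real N > 0"
  using N_ge B_ge by linarith

lemma z_nonneg: "z k \<ge> 0"
  by (induction k) (simp_all add: z_0 z_Suc less_imp_le[OF mu_pos])

lemma z_increment:
  assumes "w k \<le> real N"
  shows "z (Suc k) - z k = (z k * (1 - w k) + coin k * noise k) / (2 * real N)"
proof (cases "b k")
  case False
  have "w k / real N \<le> 1" using assms N_pos by simp
  then have "z k * (1 - w k / real N) \<ge> 0" using z_nonneg[of k] by simp
  then show ?thesis using False N_pos by (simp add: z_Suc field_simps)
qed (use N_pos in \<open>simp add: z_Suc field_simps\<close>)

lemma abs_z_increment_le:
  assumes "z k \<le> B + 1" "0 \<le> w k" "w k \<le> B + 1"
  shows "\<bar>z (Suc k) - z k\<bar> \<le> (B + 1) * (B + 2) / real N"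
proof -
  have "z (Suc k) - z k = (if b k then z k else - (z k * w k)) / real N"
    using z_increment[of k] assms N_ge N_pos by (cases "b k") (simp_all add: field_simps)
  then have "\<bar>z (Suc k) - z k\<bar> = (if b k then z k else z k * w k) / real N"
    using assms z_nonneg[of k] N_pos by (simp add: abs_mult)
  also have "\<dots> \<le> (B + 1) * (B + 2) / real N"
  proof -
    have "z k * 1 \<le> (B + 1) * (B + 2)" "z k * w k \<le> (B + 1) * (B + 2)"
      using assms z_nonneg[of k] B_ge by (intro mult_mono; simp)+
    then show ?thesis using N_pos by (intro divide_right_mono) auto
  qed
  finally show ?thesis .
qed

text \<open>The constant \<open>\<rho>\<close> collects the
  Euler defects, of order \<open>1 / N\<close>, and the fair increments summed by parts, of order \<open>\<delta>\<close>.\<close>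
context
  fixes M :: nat and \<delta> \<rho> :: real
  assumes M_le: "real M \<le> T1 * real N"
    and delta_nonneg: "\<delta> \<ge> 0"
    and coin_sums: "\<forall>k\<le>M. \<bar>\<Sum>j<k. coin j\<bar> \<le> \<delta> * real N"
    and rho_eq: "\<rho> = T1 * (K + B * \<Lambda> / 2) / real N
      + \<delta> * ((B + 1) * (B + 2) + T1 * ((B + 1) * (B + 2) * (2 * B + 3))) / 2"
    and rho_small: "\<rho> * exp ((B + 1) * T1) \<le> 1"
begin

lemma grid_le_T1: "j \<le> M \<Longrightarrow> real j / real N \<le> T1"
  using M_le N_pos by (simp add: divide_le_eq)

lemma rho_nonneg: "\<rho> \<ge> 0"
  unfolding rho_eq using B_ge Lambda_nonneg K_nonneg delta_nonneg T1_nonneg N_pos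
  by (intro add_nonneg_nonneg mult_nonneg_nonneg divide_nonneg_nonneg) auto

lemma growth_le_exp: "j \<le> M \<Longrightarrow> (1 + (B + 1) / real N) ^ j \<le> exp ((B + 1) * T1)"
proof -
  assume "j \<le> M"
  have "(1 + (B + 1) / real N) ^ j \<le> exp ((B + 1) / real N) ^ j"
    using B_ge N_pos by (intro power_mono exp_ge_add_one_self) auto
  also have "\<dots> = exp ((B + 1) * (real j / real N))"
    by (simp add: exp_of_nat_mult[symmetric] mult.commute)
  also have "\<dots> \<le> exp ((B + 1) * T1)"
    using mult_left_mono[OF grid_le_T1[OF \<open>j \<le> M\<close>], of "B + 1"] B_ge by simp
  finally show ?thesis .
qed

lemma abs_euler_defect_le:
  assumes "k < M"
  shows "\<bar>euler_defect k\<bar> \<le> K / (real N)\<^sup>2"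
proof -
  let ?t = "real k / real N" and ?h = "1 / real N"
  have "real (Suc k) / real N = ?t + ?h" by (simp add: add_divide_distrib)
  then have "\<bar>euler_defect k\<bar> = \<bar>u (?t + ?h) - u ?t - ?h * (u ?t * (1 - u (?t - \<tau>)) / 2)\<bar>"
    by (simp only:) simp
  also have "\<dots> \<le> K * ?h\<^sup>2"
    by (rule u_euler) (use grid_le_T1[of "Suc k"] assms N_pos in \<open>simp_all add: add_divide_distrib\<close>)
  also have "\<dots> = K / (real N)\<^sup>2" by (simp add: power_divide)
  finally show ?thesis .
qed

context
  fixes n :: nat
  assumes n_le: "n \<le> M" and err_le_1: "\<forall>j\<le>n. \<bar>err j\<bar> \<le> 1"
begin

lemma z_le: "j \<le> n \<Longrightarrow> z j \<le> B + 1"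
  using u_bound[OF grid_le_T1, of j] err_le_1 n_le by fastforce

lemma w_bounds: "j \<le> n \<Longrightarrow> 0 \<le> w j \<and> w j \<le> B + 1"
  using z_le[of "j - L"] z_nonneg[of "j - L"] mu_le mu_pos by (auto simp: w_eq)

lemma abs_w_increment_le:
  assumes "k < n"
  shows "\<bar>w (Suc k) - w k\<bar> \<le> (B + 1) * (B + 2) / real N"
proof -
  have "0 \<le> (B + 1) * (B + 2) / real N" using B_ge N_pos by simp
  moreover have "w (Suc k) - w k = z (Suc (k - L)) - z (k - L)" if "L \<le> k"
    using that by (simp add: w_eq Suc_diff_le)
  moreover have "w (Suc k) = w k" if "\<not> L \<le> k"
    using that z_0 by (auto simp: w_eq le_Suc_eq)
  ultimately show ?thesis
    using abs_z_increment_le[of "k - L"] z_le[of "k - L"] w_bounds[of "k - L"] assms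
    by (cases "L \<le> k") auto
qed

lemma abs_noise_increment_le:
  assumes "k < n"
  shows "\<bar>noise (Suc k) - noise k\<bar> \<le> (B + 1) * (B + 2) * (2 * B + 3) / real N"
proof -
  have "\<bar>noise (Suc k) - noise k\<bar>
      = \<bar>(z (Suc k) - z k) * (1 + w (Suc k)) + z k * (w (Suc k) - w k)\<bar>"
    by (simp add: algebra_simps)
  also have "\<dots> \<le> \<bar>z (Suc k) - z k\<bar> * \<bar>1 + w (Suc k)\<bar> + \<bar>z k\<bar> * \<bar>w (Suc k) - w k\<bar>"
    by (metis abs_mult abs_triangle_ineq)
  also have "\<dots> \<le> (B + 1) * (B + 2) / real N * (B + 2) + (B + 1) * ((B + 1) * (B + 2) / real N)"
    using abs_z_increment_le[of k] abs_w_increment_le[of k] z_le[of k] w_bounds[of k]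
      w_bounds[of "Suc k"] z_nonneg[of k] assms B_ge N_pos
    by (intro add_mono mult_mono) auto
  also have "\<dots> = (B + 1) * (B + 2) * (2 * B + 3) / real N"
    using N_pos by (simp add: field_simps)
  finally show ?thesis .
qed

lemma abs_noise_sum_le:
  assumes "n < M"
  shows "\<bar>\<Sum>k<Suc n. coin k * noise k\<bar>
    \<le> \<delta> * real N * ((B + 1) * (B + 2) + T1 * ((B + 1) * (B + 2) * (2 * B + 3)))"
proof -
  define G where "G = (B + 1) * (B + 2) * (2 * B + 3)"
  have "\<bar>\<Sum>k<Suc n. coin k * noise k\<bar> \<le> \<delta> * real N * ((B + 1) * (B + 2) + real n * (G / real N))"
  proof (rule abs_sum_by_parts_le)
    show "\<bar>noise n\<bar> \<le> (B + 1) * (B + 2)"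
      using z_le[of n] w_bounds[of n] z_nonneg[of n] B_ge unfolding abs_mult
      by (intro mult_mono) auto
  qed (use coin_sums assms abs_noise_increment_le in \<open>auto simp: G_def\<close>)
  also have "\<dots> \<le> \<delta> * real N * ((B + 1) * (B + 2) + T1 * G)"
  proof -
    have "real n * (G / real N) \<le> T1 * real N * (G / real N)"
      using assms M_le B_ge N_pos by (intro mult_right_mono) (auto simp: G_def)
    then show ?thesis
      using delta_nonneg N_pos by (intro mult_left_mono) (auto simp: G_def)
  qed
  finally show ?thesis by (simp add: G_def)
qed

lemma err_Suc_eq:
  "err (Suc n) = (\<Sum>k<Suc n. drift_gap k / (2 * real N) - euler_defect k)
    + (\<Sum>k<Suc n. coin k * noise k) / (2 * real N)"
proof -
  have "err (Suc n) = (\<Sum>k<Suc n. (z (Suc k) - z k) - (u (real (Suc k) / real N) - u (real k / real N)))"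
    by (subst sum_subtractf, subst (1 2) sum_lessThan_telescope) (simp add: z_0 u_nonpos)
  also have "\<dots> = (\<Sum>k<Suc n. (drift_gap k / (2 * real N) - euler_defect k)
      + coin k * noise k / (2 * real N))"
  proof (intro sum.cong refl)
    fix k assume "k \<in> {..<Suc n}"
    then have "w k \<le> real N" using w_bounds[of k] N_ge by auto
    show "(z (Suc k) - z k) - (u (real (Suc k) / real N) - u (real k / real N))
        = (drift_gap k / (2 * real N) - euler_defect k) + coin k * noise k / (2 * real N)"
      unfolding z_increment[OF \<open>w k \<le> real N\<close>] using N_pos by (simp add: field_simps)
  qed
  finally show ?thesis by (simp only: sum.distrib sum_divide_distrib)
qed

lemma err_le_growth:
  assumes gron: "\<forall>j\<le>n. \<bar>err j\<bar> \<le> \<rho> * (1 + (B + 1) / real N) ^ j" and "j \<le> k" "k \<le> n"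
  shows "\<bar>err j\<bar> \<le> \<rho> * (1 + (B + 1) / real N) ^ k"
proof -
  have "\<bar>err j\<bar> \<le> \<rho> * (1 + (B + 1) / real N) ^ j" using gron assms by simp
  also have "\<dots> \<le> \<rho> * (1 + (B + 1) / real N) ^ k"
    using assms rho_nonneg B_ge N_pos by (intro mult_left_mono power_increasing) auto
  finally show ?thesis .
qed

lemma abs_delay_gap_le:
  assumes gron: "\<forall>j\<le>n. \<bar>err j\<bar> \<le> \<rho> * (1 + (B + 1) / real N) ^ j" and "k \<le> n"
  shows "\<bar>u (real k / real N - \<tau>) - w k\<bar> \<le> \<rho> * (1 + (B + 1) / real N) ^ k + \<Lambda> / real N"
proof (cases "L \<le> k")
  case False
  then have "real k / real N - \<tau> \<le> 0" using L_le N_pos by (simp add: field_simps)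
  then show ?thesis
    using False rho_nonneg Lambda_nonneg N_pos B_ge by (simp add: w_eq u_nonpos)
next
  case True
  have "(real k / real N - \<tau>) - real (k - L) / real N = real L / real N - \<tau>"
    using True by (simp add: of_nat_diff diff_divide_distrib)
  moreover have "real L / real N \<le> \<tau>" "\<tau> < real L / real N + 1 / real N"
    using L_le L_gt N_pos by (simp_all add: field_simps)
  ultimately have gap: "\<bar>(real k / real N - \<tau>) - real (k - L) / real N\<bar> \<le> 1 / real N"
    by simp
  have "\<bar>u (real k / real N - \<tau>) - u (real (k - L) / real N)\<bar>
      \<le> \<Lambda> * \<bar>(real k / real N - \<tau>) - real (k - L) / real N\<bar>"
    by (rule u_lipschitz)
      (use grid_le_T1[of "k - L"] grid_le_T1[of k] \<open>k \<le> n\<close> n_le T1_nonneg tau_pos in auto)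
  also have "\<dots> \<le> \<Lambda> * (1 / real N)" by (rule mult_left_mono[OF gap Lambda_nonneg])
  finally have "\<bar>u (real k / real N - \<tau>) - u (real (k - L) / real N)\<bar> \<le> \<Lambda> / real N"
    by simp
  then show ?thesis
    using err_le_growth[OF gron, of "k - L" k] True \<open>k \<le> n\<close> by (simp add: w_eq)
qed

lemma abs_drift_gap_le:
  assumes gron: "\<forall>j\<le>n. \<bar>err j\<bar> \<le> \<rho> * (1 + (B + 1) / real N) ^ j" and "k \<le> n"
  shows "\<bar>drift_gap k\<bar> \<le> 2 * (B + 1) * \<rho> * (1 + (B + 1) / real N) ^ k + B * \<Lambda> / real N"
proof -
  define X where "X = 1 + (B + 1) / real N"
  have "0 \<le> \<rho> * X ^ k" using rho_nonneg B_ge N_pos by (simp add: X_def)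
  have "drift_gap k = err k * (1 - w k) + u (real k / real N) * (u (real k / real N - \<tau>) - w k)"
    by (simp add: algebra_simps)
  then have "\<bar>drift_gap k\<bar>
      \<le> \<bar>err k\<bar> * \<bar>1 - w k\<bar> + \<bar>u (real k / real N)\<bar> * \<bar>u (real k / real N - \<tau>) - w k\<bar>"
    by (metis abs_mult abs_triangle_ineq)
  also have "\<dots> \<le> \<rho> * X ^ k * (B + 1) + B * (\<rho> * X ^ k + \<Lambda> / real N)"
    using gron \<open>k \<le> n\<close> w_bounds[of k] u_bound[OF grid_le_T1, of k] n_le abs_delay_gap_le[OF gron \<open>k \<le> n\<close>]
      \<open>0 \<le> \<rho> * X ^ k\<close> B_ge
    by (intro add_mono mult_mono) (auto simp: X_def)
  also have "\<dots> \<le> 2 * (B + 1) * \<rho> * X ^ k + B * \<Lambda> / real N"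
    using \<open>0 \<le> \<rho> * X ^ k\<close> by (simp add: algebra_simps)
  finally show ?thesis by (simp add: X_def)
qed

lemma abs_step_error_le:
  assumes gron: "\<forall>j\<le>n. \<bar>err j\<bar> \<le> \<rho> * (1 + (B + 1) / real N) ^ j" and "k \<le> n" "k < M"
  shows "\<bar>drift_gap k / (2 * real N) - euler_defect k\<bar>
    \<le> (B + 1) / real N * (\<rho> * (1 + (B + 1) / real N) ^ k) + (B * \<Lambda> / 2 + K) / (real N)\<^sup>2"
proof -
  have "\<bar>drift_gap k / (2 * real N) - euler_defect k\<bar> \<le> \<bar>drift_gap k\<bar> / (2 * real N) + \<bar>euler_defect k\<bar>"
    using abs_triangle_ineq4[of "drift_gap k / (2 * real N)" "euler_defect k"] N_pos
    by (simp add: abs_divide)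
  also have "\<dots> \<le> (2 * (B + 1) * \<rho> * (1 + (B + 1) / real N) ^ k + B * \<Lambda> / real N) / (2 * real N)
      + K / (real N)\<^sup>2"
    using abs_drift_gap_le[OF gron \<open>k \<le> n\<close>] abs_euler_defect_le[OF \<open>k < M\<close>] N_pos
    by (intro add_mono divide_right_mono) auto
  also have "\<dots> = (B + 1) / real N * (\<rho> * (1 + (B + 1) / real N) ^ k) + (B * \<Lambda> / 2 + K) / (real N)\<^sup>2"
    using N_pos by (simp add: field_simps power2_eq_square)
  finally show ?thesis .
qed

end

lemma err_le_1_if_gronwall:
  assumes "n \<le> M" and gron: "\<forall>j\<le>n. \<bar>err j\<bar> \<le> \<rho> * (1 + (B + 1) / real N) ^ j"
  shows "\<forall>j\<le>n. \<bar>err j\<bar> \<le> 1"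
proof (intro allI impI)
  fix j assume "j \<le> n"
  have "\<bar>err j\<bar> \<le> \<rho> * (1 + (B + 1) / real N) ^ j" using gron \<open>j \<le> n\<close> by blast
  also have "\<dots> \<le> \<rho> * exp ((B + 1) * T1)"
    using growth_le_exp[of j] \<open>j \<le> n\<close> \<open>n \<le> M\<close> rho_nonneg by (intro mult_left_mono) auto
  finally show "\<bar>err j\<bar> \<le> 1" using rho_small by linarith
qed

lemma error_step:
  assumes "n < M"
    and gron: "\<And>j. j \<le> n \<Longrightarrow> \<bar>err j\<bar> \<le> \<rho> * (1 + (B + 1) / real N) ^ j"
  shows "\<bar>err (Suc n)\<bar> \<le> \<rho> + (\<Sum>k\<le>n. (B + 1) / real N * (\<rho> * (1 + (B + 1) / real N) ^ k))"
proof -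
  define X where "X = 1 + (B + 1) / real N"
  define Q where "Q = (B + 1) * (B + 2) + T1 * ((B + 1) * (B + 2) * (2 * B + 3))"
  have "n \<le> M" using assms by simp
  have gron': "\<forall>j\<le>n. \<bar>err j\<bar> \<le> \<rho> * (1 + (B + 1) / real N) ^ j" using gron by blast
  note err_le_1 = err_le_1_if_gronwall[OF \<open>n \<le> M\<close> gron']
  note step = abs_step_error_le[OF \<open>n \<le> M\<close> err_le_1 gron']
  have "\<bar>err (Suc n)\<bar> \<le> \<bar>\<Sum>k<Suc n. drift_gap k / (2 * real N) - euler_defect k\<bar>
      + \<bar>(\<Sum>k<Suc n. coin k * noise k) / (2 * real N)\<bar>"
    unfolding err_Suc_eq[OF \<open>n \<le> M\<close> err_le_1] by (rule abs_triangle_ineq)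
  also have "\<dots> \<le> (\<Sum>k<Suc n. (B + 1) / real N * (\<rho> * X ^ k) + (B * \<Lambda> / 2 + K) / (real N)\<^sup>2)
      + \<delta> * Q / 2"
  proof (rule add_mono[OF order_trans[OF sum_abs sum_mono]])
    show "\<bar>drift_gap k / (2 * real N) - euler_defect k\<bar>
        \<le> (B + 1) / real N * (\<rho> * X ^ k) + (B * \<Lambda> / 2 + K) / (real N)\<^sup>2" if "k \<in> {..<Suc n}" for k
      using step[of k] that \<open>n < M\<close> by (simp add: X_def)
    show "\<bar>(\<Sum>k<Suc n. coin k * noise k) / (2 * real N)\<bar> \<le> \<delta> * Q / 2"
      using divide_right_mono[OF abs_noise_sum_le[OF \<open>n \<le> M\<close> err_le_1 \<open>n < M\<close>], of "2 * real N"] N_pos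
      by (simp add: abs_divide Q_def)
  qed
  also have "\<dots> = (\<Sum>k\<le>n. (B + 1) / real N * (\<rho> * X ^ k))
      + real (Suc n) * (B * \<Lambda> / 2 + K) / (real N)\<^sup>2 + \<delta> * Q / 2"
    by (simp add: sum.distrib lessThan_Suc_atMost)
  also have "real (Suc n) * (B * \<Lambda> / 2 + K) / (real N)\<^sup>2 \<le> (T1 * real N) * (B * \<Lambda> / 2 + K) / (real N)\<^sup>2"
    using \<open>n < M\<close> M_le B_ge Lambda_nonneg K_nonneg
    by (intro divide_right_mono mult_right_mono) auto
  also have "(T1 * real N) * (B * \<Lambda> / 2 + K) / (real N)\<^sup>2 = T1 * (K + B * \<Lambda> / 2) / real N"
    using N_pos by (simp add: field_simps power2_eq_square)
  finally show ?thesis by (simp add: rho_eq Q_def X_def algebra_simps)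
qed

lemma error_bound: "n \<le> M \<Longrightarrow> \<bar>err n\<bar> \<le> \<rho> * exp ((B + 1) * T1)"
proof -
  assume "n \<le> M"
  have "\<bar>err n\<bar> \<le> \<rho> * (1 + (B + 1) / real N) ^ n"
    by (rule discrete_gronwall[OF _ _ error_step \<open>n \<le> M\<close>])
      (use B_ge N_pos rho_nonneg z_0 u_nonpos[of 0] in auto)
  also have "\<dots> \<le> \<rho> * exp ((B + 1) * T1)"
    using growth_le_exp[OF \<open>n \<le> M\<close>] rho_nonneg by (rule mult_left_mono)
  finally show ?thesis .
qed

lemma abs_z_minus_u_le:
  assumes "m \<le> M" "t \<le> T1" "\<bar>real m - real N * t\<bar> \<le> \<delta> * real N + 2"
  shows "\<bar>z m - u t\<bar> \<le> \<rho> * exp ((B + 1) * T1) + \<Lambda> * (\<delta> + 2 / real N)"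
proof -
  have "\<bar>z m - u t\<bar> \<le> \<bar>err m\<bar> + \<bar>u (real m / real N) - u t\<bar>" by linarith
  also have "\<dots> \<le> \<rho> * exp ((B + 1) * T1) + \<Lambda> * (\<delta> + 2 / real N)"
    using error_bound[OF \<open>m \<le> M\<close>] u_lipschitz_grid[OF N_pos _ assms(2,3)] assms(1) M_le
    by (intro add_mono) auto
  finally show ?thesis .
qed

lemma abs_w_minus_mu_le:
  assumes "m \<le> M" "real m \<le> \<tau> * real N + \<delta> * real N + 1"
  shows "\<bar>w m - \<mu>\<bar> \<le> \<rho> * exp ((B + 1) * T1) + \<Lambda> * (\<delta> + 2 / real N)"
proof (cases "L \<le> m")
  case True
  have "\<bar>real (m - L) - real N * 0\<bar> \<le> \<delta> * real N + 2"
    using True assms(2) L_gt by (simp add: of_nat_diff)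
  then show ?thesis
    using abs_z_minus_u_le[of "m - L" 0] True assms(1) T1_nonneg u_nonpos[of 0] by (simp add: w_eq)
next
  case False
  then show ?thesis
    using rho_nonneg Lambda_nonneg delta_nonneg N_pos by (simp add: w_eq)
qed

end

end

section \<open>The rescaled process on typical paths\<close>

lemma xi_delayed:
  "j \<le> 0 \<Longrightarrow> xi \<tau> \<mu> N \<omega> n j =
    (if 0 \<le> int n + j then xi \<tau> \<mu> N \<omega> (nat (int n + j)) 0 else \<mu> * real N)"
proof (induction n arbitrary: j)
  case (Suc n)
  show ?case
  proof (cases "j = 0")
    case True
    then show ?thesis by (simp only: add_0_right nat_int of_nat_0_le_iff if_True)
  next
    case False
    then have "xi \<tau> \<mu> N \<omega> (Suc n) j = xi \<tau> \<mu> N \<omega> n (j + 1)"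
      using Suc.prems by (simp add: theta_plus_def theta_minus_def)
    then show ?thesis
      using Suc.IH[of "j + 1"] Suc.prems False by (simp add: algebra_simps)
  qed
qed auto

lemma coupled_chain_xi:
  assumes "solution_estimates \<mu> \<tau> u B \<Lambda> K T1" and "\<mu> > 0" and "B + 1 \<le> real N"
  shows "coupled_chain \<mu> \<tau> u B \<Lambda> K T1 N (L_of \<tau> N) (\<lambda>k. fst (\<omega> k))
    (\<lambda>k. xi \<tau> \<mu> N \<omega> k 0 / real N) (\<lambda>k. xi \<tau> \<mu> N \<omega> k (- int (L_of \<tau> N)) / real N)"
proof -
  interpret solution_estimates \<mu> \<tau> u B \<Lambda> K T1 by fact
  have "real N > 0" using assms(3) B_ge by linarith
  have L: "real (L_of \<tau> N) = of_int \<lfloor>\<tau> * real N\<rfloor>"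
    using tau_pos by (simp add: L_of_def)
  show ?thesis
  proof (unfold_locales)
    fix k
    show "xi \<tau> \<mu> N \<omega> k (- int (L_of \<tau> N)) / real N =
      (if L_of \<tau> N \<le> k then xi \<tau> \<mu> N \<omega> (k - L_of \<tau> N) 0 / real N else \<mu>)"
      using xi_delayed[of "- int (L_of \<tau> N)" \<tau> \<mu> N \<omega> k] \<open>real N > 0\<close>
      by (auto simp: nat_minus_as_int)
    show "xi \<tau> \<mu> N \<omega> (Suc k) 0 / real N = (if fst (\<omega> k)
        then xi \<tau> \<mu> N \<omega> k 0 / real N * (1 + 1 / real N)
        else max (xi \<tau> \<mu> N \<omega> k 0 / real N
          * (1 - xi \<tau> \<mu> N \<omega> k (- int (L_of \<tau> N)) / real N / real N)) 0)"
      using \<open>real N > 0\<close>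
      by (simp add: theta_plus_def theta_minus_def max_def field_simps power2_eq_square)
    show "xi \<tau> \<mu> N \<omega> 0 0 / real N = \<mu>" using \<open>real N > 0\<close> by simp
    show "real (L_of \<tau> N) \<le> \<tau> * real N" "\<tau> * real N < real (L_of \<tau> N) + 1"
      using L by linarith+
  qed (use assms in simp_all)
qed

lemma jump_time_mono: "\<forall>j. 0 \<le> snd (\<omega> j) \<Longrightarrow> m \<le> n \<Longrightarrow> jump_time \<omega> m \<le> jump_time \<omega> n"
  unfolding jump_time_def by (intro sum_mono2) auto

lemma njumps_bracket:
  assumes nonneg: "\<forall>j. 0 \<le> snd (\<omega> j)" and "0 \<le> s" "s < jump_time \<omega> M"
  shows "njumps \<omega> s < M \<and> jump_time \<omega> (njumps \<omega> s) \<le> s \<and> s < jump_time \<omega> (Suc (njumps \<omega> s))"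
proof -
  have "M > 0" using assms by (cases M) (auto simp: jump_time_def)
  have ex: "\<exists>n. s < jump_time \<omega> (Suc n)" using assms \<open>M > 0\<close> by (intro exI[of _ "M - 1"]) auto
  define m where "m = (LEAST n. s < jump_time \<omega> (Suc n))"
  have m_Suc: "s < jump_time \<omega> (Suc m)" unfolding m_def by (rule LeastI_ex[OF ex])
  have m_le: "jump_time \<omega> m \<le> s"
  proof (cases m)
    case (Suc n)
    then show ?thesis using not_less_Least[of n "\<lambda>n. s < jump_time \<omega> (Suc n)"] by (simp add: m_def)
  qed (use assms in \<open>simp add: jump_time_def\<close>)
  have "m \<le> M - 1" unfolding m_def using assms \<open>M > 0\<close> by (intro Least_le) simp
  moreover have "{n. 0 < n \<and> jump_time \<omega> n \<le> s} = {1..m}"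
  proof (intro set_eqI iffI)
    fix n assume n: "n \<in> {n. 0 < n \<and> jump_time \<omega> n \<le> s}"
    then have "\<not> Suc m \<le> n" using jump_time_mono[OF nonneg, of "Suc m" n] m_Suc by auto
    then show "n \<in> {1..m}" using n by auto
  next
    fix n assume "n \<in> {1..m}"
    then show "n \<in> {n. 0 < n \<and> jump_time \<omega> n \<le> s}"
      using jump_time_mono[OF nonneg, of n m] m_le by auto
  qed
  then have "njumps \<omega> s = m" by (simp add: njumps_def)
  ultimately show ?thesis using m_Suc m_le \<open>M > 0\<close> by simp
qed

lemma njumps_close:
  assumes nonneg: "\<forall>j. 0 \<le> snd (\<omega> j)" and close: "\<forall>n\<le>M. \<bar>jump_time \<omega> n - real n\<bar> \<le> D"
    and "0 \<le> s" "s < jump_time \<omega> M"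
  shows "njumps \<omega> s < M" "\<bar>real (njumps \<omega> s) - s\<bar> \<le> D + 1"
proof -
  let ?m = "njumps \<omega> s"
  have m: "?m < M" "jump_time \<omega> ?m \<le> s" "s < jump_time \<omega> (Suc ?m)"
    using njumps_bracket[OF assms(1,3,4)] by auto
  then show "?m < M" by simp
  have "\<bar>jump_time \<omega> ?m - real ?m\<bar> \<le> D" "\<bar>jump_time \<omega> (Suc ?m) - real (Suc ?m)\<bar> \<le> D"
    using close m(1) Suc_leI[OF m(1)] by (simp_all del: of_nat_Suc)
  then show "\<bar>real ?m - s\<bar> \<le> D + 1" using m(2,3) by simp
qed

lemma skorokhod_dist_le_sup:
  assumes "a \<le> b" "0 \<le> c" "\<forall>t\<in>{a..b}. \<bar>x t - y t\<bar> \<le> c"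
  shows "skorokhod_dist a b x y \<le> ereal c"
proof -
  have "(\<lambda>t. t) \<in> {l. strict_mono_on {a..b} l \<and> continuous_on {a..b} l \<and> l ` {a..b} = {a..b}}"
    by (auto simp: strict_mono_on_def)
  then have "skorokhod_dist a b x y
      \<le> max (SUP t\<in>{a..b}. ereal \<bar>t - t\<bar>) (SUP t\<in>{a..b}. ereal \<bar>x t - y t\<bar>)"
    unfolding skorokhod_dist_def by (rule INF_lower2) simp
  also have "\<dots> \<le> ereal c"
    using assms by (intro max.boundedI SUP_least) auto
  finally show ?thesis .
qed

definition coin_value :: "bool \<times> real \<Rightarrow> real" where
  "coin_value x = (if fst x then 1 else -1)"

definition holding_excess :: "bool \<times> real \<Rightarrow> real" where
  "holding_excess x = snd x - 1"

lemma jump_time_minus_eq: "jump_time \<omega> n - real n = (\<Sum>j<n. holding_excess (\<omega> j))"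
  by (simp add: jump_time_def holding_excess_def sum_subtractf)

definition typical_path :: "real \<Rightarrow> real \<Rightarrow> nat \<Rightarrow> (nat \<Rightarrow> bool \<times> real) \<Rightarrow> bool" where
  "typical_path c \<delta> N \<omega> \<longleftrightarrow> (\<forall>j. 0 \<le> snd (\<omega> j)) \<and>
    (\<forall>n. real n \<le> c * real N \<longrightarrow>
      \<bar>\<Sum>j<n. coin_value (\<omega> j)\<bar> \<le> \<delta> * real N \<and> \<bar>\<Sum>j<n. holding_excess (\<omega> j)\<bar> \<le> \<delta> * real N)"

lemma njumps_typical:
  assumes typical: "typical_path c \<delta> N \<omega>" and "\<delta> \<le> 1 / 2" "2 \<le> real N"
    and "0 \<le> s" "s \<le> real N * (c - 1)"
  shows "real (njumps \<omega> s) \<le> c * real N" "\<bar>real (njumps \<omega> s) - s\<bar> \<le> \<delta> * real N + 1"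
proof -
  define M where "M = nat \<lfloor>c * real N\<rfloor>"
  have "0 \<le> real N * (c - 1)" using assms by linarith
  then have "0 \<le> c - 1" using assms by (simp add: zero_le_mult_iff)
  then have range: "n \<le> M \<longleftrightarrow> real n \<le> c * real N" for n
    unfolding M_def using assms by (simp add: le_nat_iff le_floor_iff)
  have nonneg: "\<forall>j. 0 \<le> snd (\<omega> j)"
    and jumps: "\<forall>n\<le>M. \<bar>jump_time \<omega> n - real n\<bar> \<le> \<delta> * real N"
    using typical range by (auto simp: typical_path_def jump_time_minus_eq)
  have "s < jump_time \<omega> M"
  proof -
    have "\<delta> * real N \<le> 1 / 2 * real N" by (rule mult_right_mono) (use assms in auto)
    moreover have "c * real N < real M + 1" using range[of "M + 1"] by simp
    moreover have "s \<le> c * real N - real N" using assms by (simp add: algebra_simps)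
    ultimately have "s < real M - \<delta> * real N" using assms by linarith
    also have "\<dots> \<le> jump_time \<omega> M" using jumps by (auto simp: abs_le_iff)
    finally show ?thesis .
  qed
  note bracket = njumps_close[OF nonneg jumps \<open>0 \<le> s\<close> this]
  show "real (njumps \<omega> s) \<le> c * real N" using bracket(1) range[of "njumps \<omega> s"] by simp
  show "\<bar>real (njumps \<omega> s) - s\<bar> \<le> \<delta> * real N + 1" by (rule bracket(2))
qed

lemma (in solution_estimates) Yproc_error_le:
  fixes N :: nat and T \<delta> \<rho> t :: real
  assumes T1_eq: "T1 = T + \<tau> + 1" and "\<mu> > 0" and N_ge: "B + 1 \<le> real N"
    and delta: "0 \<le> \<delta>" "\<delta> \<le> 1 / 2"
    and rho_eq: "\<rho> = T1 * (K + B * \<Lambda> / 2) / real N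
      + \<delta> * ((B + 1) * (B + 2) + T1 * ((B + 1) * (B + 2) * (2 * B + 3))) / 2"
    and rho_small: "\<rho> * exp ((B + 1) * T1) \<le> 1"
    and typical: "typical_path T1 \<delta> N \<omega>" and t: "t \<in> {-\<tau>..T}"
  shows "\<bar>Yproc \<tau> \<mu> N \<omega> t - u t\<bar> \<le> \<rho> * exp ((B + 1) * T1) + \<Lambda> * (\<delta> + 2 / real N)"
proof -
  define L where "L = L_of \<tau> N"
  define z where "z k = xi \<tau> \<mu> N \<omega> k 0 / real N" for k
  define w where "w k = xi \<tau> \<mu> N \<omega> k (- int L) / real N" for k
  define M where "M = nat \<lfloor>T1 * real N\<rfloor>"
  interpret coupled_chain \<mu> \<tau> u B \<Lambda> K T1 N L "\<lambda>k. fst (\<omega> k)" z w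
    unfolding z_def w_def L_def
    by (rule coupled_chain_xi[OF solution_estimates_axioms \<open>\<mu> > 0\<close> N_ge])
  have range: "n \<le> M \<longleftrightarrow> real n \<le> T1 * real N" for n
    unfolding M_def using T1_nonneg N_pos by (simp add: le_nat_iff le_floor_iff)
  have M_le: "real M \<le> T1 * real N" using range by blast
  have "\<forall>k\<le>M. \<bar>\<Sum>j<k. coin j\<bar> \<le> \<delta> * real N"
    using typical range by (auto simp: typical_path_def coin_value_def)
  note close = abs_z_minus_u_le[OF M_le delta(1) this rho_eq rho_small]
    abs_w_minus_mu_le[OF M_le delta(1) this rho_eq rho_small]
  define s where "s = (if t < 0 then real N * (t + \<tau>) else real N * t)"
  have "0 \<le> s" "s \<le> real N * (T1 - 1)"
    using t N_pos tau_pos by (auto simp: s_def T1_eq intro!: mult_left_mono)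
  moreover have "2 \<le> real N" using N_ge B_ge by simp
  ultimately have "njumps \<omega> s \<le> M" and m_close: "\<bar>real (njumps \<omega> s) - s\<bar> \<le> \<delta> * real N + 1"
    using njumps_typical[OF typical delta(2)] range by auto
  have "Yproc \<tau> \<mu> N \<omega> t = (if t < 0 then w (njumps \<omega> s) else z (njumps \<omega> s))"
    by (simp add: Yproc_def Xproc_def s_def w_def z_def L_def)
  moreover have "real (njumps \<omega> s) \<le> \<tau> * real N + \<delta> * real N + 1" if "t < 0"
    using m_close that mult_neg_pos[OF that N_pos] by (simp add: s_def abs_le_iff algebra_simps)
  moreover have "\<bar>real (njumps \<omega> s) - real N * t\<bar> \<le> \<delta> * real N + 2" if "\<not> t < 0"
    using m_close that by (simp add: s_def abs_le_iff)
  ultimately show ?thesis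
    using close \<open>njumps \<omega> s \<le> M\<close> t T1_eq tau_pos u_nonpos[of t] by auto
qed

lemma (in solution_estimates) Yproc_eventually_close:
  fixes T \<epsilon> :: real
  assumes T1_eq: "T1 = T + \<tau> + 1" and "\<mu> > 0" and "\<epsilon> > 0"
  shows "\<exists>\<delta>>0. \<forall>\<^sub>F N in sequentially. \<forall>\<omega>. typical_path T1 \<delta> N \<omega> \<longrightarrow>
    (\<forall>t\<in>{-\<tau>..T}. \<bar>Yproc \<tau> \<mu> N \<omega> t - u t\<bar> \<le> \<epsilon>)"
proof -
  define \<epsilon>' where "\<epsilon>' = min \<epsilon> 1"
  define E where "E = exp ((B + 1) * T1)"
  define Q where "Q = (B + 1) * (B + 2) + T1 * ((B + 1) * (B + 2) * (2 * B + 3))"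
  define D where "D = Q * E / 2 + \<Lambda>"
  define c where "c = T1 * (K + B * \<Lambda> / 2) * E + 2 * \<Lambda>"
  define \<delta> where "\<delta> = min (1 / 2) (\<epsilon>' / (2 * (D + 1)))"
  have "\<epsilon>' > 0" "\<epsilon>' \<le> \<epsilon>" "\<epsilon>' \<le> 1" using \<open>\<epsilon> > 0\<close> by (auto simp: \<epsilon>'_def)
  have "D \<ge> 0" using B_ge T1_nonneg Lambda_nonneg by (simp add: D_def Q_def E_def)
  have "\<delta> > 0" using \<open>\<epsilon>' > 0\<close> \<open>D \<ge> 0\<close> by (simp add: \<delta>_def)
  have "\<delta> \<le> 1 / 2" unfolding \<delta>_def by (rule min.cobounded1)
  have "\<delta> * D \<le> \<epsilon>' / 2"
  proof -
    have "\<delta> * D \<le> \<epsilon>' / (2 * (D + 1)) * (D + 1)"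
      using \<open>\<delta> > 0\<close> \<open>D \<ge> 0\<close> by (intro mult_mono) (auto simp: \<delta>_def)
    also have "\<dots> = \<epsilon>' / 2" using \<open>D \<ge> 0\<close> by (simp add: field_simps)
    finally show ?thesis .
  qed
  obtain n0 :: nat where "B + 1 \<le> real n0" using real_arch_simple by blast
  have "\<forall>\<^sub>F N in sequentially. c / real N < \<epsilon>' / 2"
    by (rule order_tendstoD(2)[OF lim_const_over_n]) (use \<open>\<epsilon>' > 0\<close> in simp)
  then have "\<forall>\<^sub>F N in sequentially. c / real N < \<epsilon>' / 2 \<and> B + 1 \<le> real N"
    using eventually_ge_at_top[of n0]
    by eventually_elim (use \<open>B + 1 \<le> real n0\<close> in auto)
  moreover have "\<bar>Yproc \<tau> \<mu> N \<omega> t - u t\<bar> \<le> \<epsilon>"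
    if N: "c / real N < \<epsilon>' / 2" "B + 1 \<le> real N" and "typical_path T1 \<delta> N \<omega>" "t \<in> {-\<tau>..T}"
    for N \<omega> t
  proof -
    define \<rho> where "\<rho> = T1 * (K + B * \<Lambda> / 2) / real N + \<delta> * Q / 2"
    have "real N > 0" using N(2) B_ge by linarith
    have "\<rho> * E + \<Lambda> * (\<delta> + 2 / real N) = c / real N + \<delta> * D"
      using \<open>real N > 0\<close> by (simp add: \<rho>_def c_def D_def field_simps)
    also have "\<dots> \<le> \<epsilon>'" using N(1) \<open>\<delta> * D \<le> \<epsilon>' / 2\<close> by linarith
    finally have total: "\<rho> * E + \<Lambda> * (\<delta> + 2 / real N) \<le> \<epsilon>'" .
    moreover have "0 \<le> \<Lambda> * (\<delta> + 2 / real N)"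
      using Lambda_nonneg \<open>\<delta> > 0\<close> \<open>real N > 0\<close> by simp
    ultimately have "\<rho> * exp ((B + 1) * T1) \<le> 1" using \<open>\<epsilon>' \<le> 1\<close> by (simp add: E_def)
    then have "\<bar>Yproc \<tau> \<mu> N \<omega> t - u t\<bar> \<le> \<rho> * E + \<Lambda> * (\<delta> + 2 / real N)"
      unfolding E_def
      by (intro Yproc_error_le[OF T1_eq \<open>\<mu> > 0\<close> N(2)])
        (use \<open>\<delta> > 0\<close> \<open>\<delta> \<le> 1 / 2\<close> that in \<open>auto simp: \<rho>_def Q_def\<close>)
    then show ?thesis using total \<open>\<epsilon>' \<le> \<epsilon>\<close> by linarith
  qed
  ultimately show ?thesis
    using \<open>\<delta> > 0\<close> by (intro exI[of _ \<delta>]) (auto elim!: eventually_mono)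
qed

section \<open>Typical paths are likely\<close>

lemma prob_space_step_space: "prob_space step_space"
  unfolding step_space_def
  by (intro prob_space_pair prob_space_measure_pmf prob_space_exponential_density) simp

lemma product_prob_space_steps: "product_prob_space (\<lambda>_::nat. step_space)"
  using prob_space_step_space
  by (simp add: product_prob_space_def product_prob_space_axioms_def product_sigma_finite_def
      prob_space_imp_sigma_finite)

lemma prob_space_hp_space: "prob_space hp_space"
proof -
  interpret product_prob_space "\<lambda>_::nat. step_space" UNIV by (rule product_prob_space_steps)
  show ?thesis unfolding hp_space_def by (rule P.prob_space_axioms)
qed

lemma measurable_hp_space_component: "(\<lambda>\<omega>. \<omega> i) \<in> measurable hp_space step_space"
  unfolding hp_space_def by (rule measurable_component_singleton) simp

lemma distr_hp_space_component: "distr hp_space step_space (\<lambda>\<omega>. \<omega> i) = step_space"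
proof -
  interpret product_prob_space "\<lambda>_::nat. step_space" UNIV by (rule product_prob_space_steps)
  show ?thesis unfolding hp_space_def by (rule PiM_component) simp
qed

lemma
  fixes g :: "bool \<times> real \<Rightarrow> real"
  assumes "g \<in> borel_measurable step_space"
  shows integral_hp_space_component: "integral\<^sup>L hp_space (\<lambda>\<omega>. g (\<omega> i)) = integral\<^sup>L step_space g"
    and integrable_hp_space_component_iff:
      "integrable hp_space (\<lambda>\<omega>. g (\<omega> i)) \<longleftrightarrow> integrable step_space g"
  using integral_distr[OF measurable_hp_space_component assms, of i]
    integrable_distr_eq[OF measurable_hp_space_component assms, of i]
  by (simp_all add: distr_hp_space_component)

lemma
  fixes f :: "bool \<times> real \<Rightarrow> real"
  assumes "i \<noteq> j" and f: "f \<in> borel_measurable step_space" "integrable step_space f"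
  shows integral_hp_space_two_components:
      "integral\<^sup>L hp_space (\<lambda>\<omega>. f (\<omega> i) * f (\<omega> j)) = (integral\<^sup>L step_space f)\<^sup>2"
    and integrable_hp_space_two_components: "integrable hp_space (\<lambda>\<omega>. f (\<omega> i) * f (\<omega> j))"
proof -
  interpret product_prob_space "\<lambda>_::nat. step_space" UNIV by (rule product_prob_space_steps)
  interpret H: prob_space hp_space by (rule prob_space_hp_space)
  have "H.indep_vars (\<lambda>_. step_space) (\<lambda>l \<omega>. \<omega> l) {i, j}"
  proof (rule H.indep_vars_iff_distr_eq_PiM[THEN iffD2])
    show "distr hp_space (Pi\<^sub>M {i, j} (\<lambda>_. step_space)) (\<lambda>x. \<lambda>l\<in>{i, j}. x l)
        = Pi\<^sub>M {i, j} (\<lambda>l. distr hp_space step_space (\<lambda>\<omega>. \<omega> l))"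
      unfolding hp_space_def distr_hp_space_component[unfolded hp_space_def]
      using distr_PiM_restrict_finite[of "{i, j}"] by simp
  qed (simp_all add: measurable_hp_space_component)
  then have indep: "H.indep_vars (\<lambda>_. borel) (\<lambda>l \<omega>. f (\<omega> l)) {i, j}"
    using H.indep_vars_compose2[of "\<lambda>_. step_space" _ _ "\<lambda>_. f" "\<lambda>_. borel"] f by simp
  have int: "integrable hp_space (\<lambda>\<omega>. f (\<omega> l))" for l
    using integrable_hp_space_component_iff f by simp
  show "integral\<^sup>L hp_space (\<lambda>\<omega>. f (\<omega> i) * f (\<omega> j)) = (integral\<^sup>L step_space f)\<^sup>2"
    using H.indep_vars_lebesgue_integral[OF _ indep int] \<open>i \<noteq> j\<close> f(1)
    by (simp add: integral_hp_space_component power2_eq_square)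
  show "integrable hp_space (\<lambda>\<omega>. f (\<omega> i) * f (\<omega> j))"
    using H.indep_vars_integrable[OF _ indep int] \<open>i \<noteq> j\<close> by simp
qed

definition grid_deviation_event ::
  "(bool \<times> real \<Rightarrow> real) \<Rightarrow> real \<Rightarrow> nat \<Rightarrow> nat \<Rightarrow> (nat \<Rightarrow> bool \<times> real) set" where
  "grid_deviation_event f a g I = (\<Union>i\<le>I. {\<omega> \<in> space hp_space. a \<le> \<bar>\<Sum>j<i * g. f (\<omega> j)\<bar>})"

context
  fixes f :: "bool \<times> real \<Rightarrow> real"
  assumes f_meas: "f \<in> borel_measurable step_space"
    and f_square: "integrable step_space (\<lambda>x. (f x)\<^sup>2)"
    and f_mean: "integral\<^sup>L step_space f = 0"
begin

lemma
  shows integrable_partial_sum_square: "integrable hp_space (\<lambda>\<omega>. (\<Sum>j<k. f (\<omega> j))\<^sup>2)"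
    and integral_partial_sum_square:
      "integral\<^sup>L hp_space (\<lambda>\<omega>. (\<Sum>j<k. f (\<omega> j))\<^sup>2) = real k * integral\<^sup>L step_space (\<lambda>x. (f x)\<^sup>2)"
    and integral_partial_sum: "integral\<^sup>L hp_space (\<lambda>\<omega>. \<Sum>j<k. f (\<omega> j)) = 0"
proof -
  interpret prob_space step_space by (rule prob_space_step_space)
  have f_int: "integrable step_space f" by (rule square_integrable_imp_integrable[OF f_meas f_square])
  have sq_meas: "(\<lambda>x. (f x)\<^sup>2) \<in> borel_measurable step_space" using f_meas by measurable
  have comp_int: "integrable hp_space (\<lambda>\<omega>. f (\<omega> l))" for l
    using integrable_hp_space_component_iff f_meas f_int by simp
  have pair: "integrable hp_space (\<lambda>\<omega>. f (\<omega> i) * f (\<omega> j))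
      \<and> integral\<^sup>L hp_space (\<lambda>\<omega>. f (\<omega> i) * f (\<omega> j))
        = (if i = j then integral\<^sup>L step_space (\<lambda>x. (f x)\<^sup>2) else 0)" for i j
  proof (cases "i = j")
    case True
    then show ?thesis
      using integrable_hp_space_component_iff[OF sq_meas] integral_hp_space_component[OF sq_meas] f_square
      by (simp add: power2_eq_square)
  qed (use integral_hp_space_two_components integrable_hp_space_two_components f_meas f_int f_mean
      in simp)
  have sq: "(\<Sum>j<k. f (\<omega> j))\<^sup>2 = (\<Sum>i<k. \<Sum>j<k. f (\<omega> i) * f (\<omega> j))" for \<omega>
    by (simp add: power2_eq_square sum_product)
  show "integrable hp_space (\<lambda>\<omega>. (\<Sum>j<k. f (\<omega> j))\<^sup>2)"
    unfolding sq using pair by (intro Bochner_Integration.integrable_sum) blast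
  show "integral\<^sup>L hp_space (\<lambda>\<omega>. (\<Sum>j<k. f (\<omega> j))\<^sup>2) = real k * integral\<^sup>L step_space (\<lambda>x. (f x)\<^sup>2)"
    unfolding sq using pair by (simp add: integral_sum)
  show "integral\<^sup>L hp_space (\<lambda>\<omega>. \<Sum>j<k. f (\<omega> j)) = 0"
    using comp_int by (simp add: integral_sum integral_hp_space_component[OF f_meas] f_mean)
qed

lemma measure_partial_sum_ge_le:
  assumes "a > 0"
  shows "measure hp_space {\<omega> \<in> space hp_space. a \<le> \<bar>\<Sum>j<k. f (\<omega> j)\<bar>}
    \<le> real k * integral\<^sup>L step_space (\<lambda>x. (f x)\<^sup>2) / a\<^sup>2"
proof -
  interpret H: prob_space hp_space by (rule prob_space_hp_space)
  have "(\<lambda>\<omega>. \<Sum>j<k. f (\<omega> j)) \<in> borel_measurable hp_space"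
    by (intro borel_measurable_sum measurable_compose[OF measurable_hp_space_component f_meas])
  from H.Chebyshev_inequality[OF this integrable_partial_sum_square assms] show ?thesis
    by (simp add: integral_partial_sum integral_partial_sum_square)
qed

lemma partial_sum_level_sets: "{\<omega> \<in> space hp_space. a \<le> \<bar>\<Sum>j<k. f (\<omega> j)\<bar>} \<in> sets hp_space"
proof -
  have [measurable]: "(\<lambda>\<omega>. f (\<omega> j)) \<in> borel_measurable hp_space" for j
    using measurable_compose[OF measurable_hp_space_component f_meas] .
  show ?thesis by measurable
qed

lemma grid_deviation_event_sets: "grid_deviation_event f a g I \<in> sets hp_space"
  unfolding grid_deviation_event_def by (intro sets.finite_UN partial_sum_level_sets) auto

lemma measure_grid_deviation_event_le:
  assumes "a > 0"
  shows "measure hp_space (grid_deviation_event f a g I)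
    \<le> real (Suc I) * (real (I * g) * integral\<^sup>L step_space (\<lambda>x. (f x)\<^sup>2) / a\<^sup>2)"
proof -
  let ?V = "integral\<^sup>L step_space (\<lambda>x. (f x)\<^sup>2)"
  have "?V \<ge> 0" by simp
  have "measure hp_space (grid_deviation_event f a g I)
      \<le> (\<Sum>i\<le>I. measure hp_space {\<omega> \<in> space hp_space. a \<le> \<bar>\<Sum>j<i * g. f (\<omega> j)\<bar>})"
    unfolding grid_deviation_event_def by (intro measure_UNION_le partial_sum_level_sets) auto
  also have "\<dots> \<le> (\<Sum>i\<le>I. real (I * g) * ?V / a\<^sup>2)"
  proof (intro sum_mono order_trans[OF measure_partial_sum_ge_le[OF assms]])
    fix i assume "i \<in> {..I}"
    then have "i * g \<le> I * g" by (simp add: mult_le_mono1)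
    then have "real (i * g) \<le> real (I * g)" by (simp only: of_nat_le_iff)
    then show "real (i * g) * ?V / a\<^sup>2 \<le> real (I * g) * ?V / a\<^sup>2"
      using \<open>?V \<ge> 0\<close> by (intro divide_right_mono mult_right_mono) auto
  qed
  finally show ?thesis by simp
qed

end

lemma distr_pair_snd:
  assumes "prob_space M" "prob_space N"
  shows "distr (M \<Otimes>\<^sub>M N) N snd = N"
proof (intro measure_eqI)
  interpret M: prob_space M by fact
  interpret N: prob_space N by fact
  fix A assume A: "A \<in> sets (distr (M \<Otimes>\<^sub>M N) N snd)"
  then have "emeasure (distr (M \<Otimes>\<^sub>M N) N snd) A = emeasure (M \<Otimes>\<^sub>M N) (space M \<times> A)"
    by (auto simp: emeasure_distr space_pair_measure dest: sets.sets_into_space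
        intro!: arg_cong2[where f = emeasure])
  with A show "emeasure (distr (M \<Otimes>\<^sub>M N) N snd) A = emeasure N A"
    by (simp add: N.emeasure_pair_measure_Times M.emeasure_space_1)
qed simp

lemma coin_value_moments:
  shows "coin_value \<in> borel_measurable step_space"
    and "integrable step_space (\<lambda>x. (coin_value x)\<^sup>2)"
    and "integral\<^sup>L step_space coin_value = 0"
    and "integral\<^sup>L step_space (\<lambda>x. (coin_value x)\<^sup>2) = 1"
proof -
  interpret prob_space step_space by (rule prob_space_step_space)
  have fst_meas: "fst \<in> measurable step_space (measure_pmf (bernoulli_pmf (1 / 2)))"
    unfolding step_space_def by (rule measurable_fst)
  show "coin_value \<in> borel_measurable step_space"
    using measurable_compose[OF fst_meas, of "\<lambda>b. if b then 1 else -1 :: real"]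
    by (simp add: coin_value_def[abs_def])
  have "(\<lambda>x. (coin_value x)\<^sup>2) = (\<lambda>x. 1)" by (auto simp: coin_value_def)
  then show "integrable step_space (\<lambda>x. (coin_value x)\<^sup>2)"
    and "integral\<^sup>L step_space (\<lambda>x. (coin_value x)\<^sup>2) = 1"
    by (simp_all add: prob_space)
  have "distr step_space (measure_pmf (bernoulli_pmf (1 / 2))) fst = measure_pmf (bernoulli_pmf (1 / 2))"
    unfolding step_space_def
    by (rule prob_space.distr_pair_fst[OF prob_space_exponential_density]) simp
  then show "integral\<^sup>L step_space coin_value = 0"
    using integral_distr[OF fst_meas, of "\<lambda>b. if b then 1 else -1 :: real"]
    by (simp add: coin_value_def[abs_def])
qed

lemma holding_excess_moments:
  shows "holding_excess \<in> borel_measurable step_space"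
    and "integrable step_space (\<lambda>x. (holding_excess x)\<^sup>2)"
    and "integral\<^sup>L step_space holding_excess = 0"
proof -
  let ?E = "density lborel (exponential_density 1) :: real measure"
  interpret E: prob_space ?E by (rule prob_space_exponential_density) simp
  have snd_meas: "snd \<in> measurable step_space ?E"
    unfolding step_space_def by (rule measurable_snd)
  have distr_snd: "distr step_space ?E snd = ?E"
    unfolding step_space_def
    by (rule distr_pair_snd[OF prob_space_measure_pmf E.prob_space_axioms])
  have "distributed ?E lborel (\<lambda>x. x) (exponential_density 1)"
    unfolding distributed_def by (auto intro!: measurable_ident_sets distr_id2)
  note moment = E.erlang_ith_moment_integrable[OF _ this] E.erlang_ith_moment[OF _ this]
  have int1: "integrable ?E (\<lambda>s. s)" and int2: "integrable ?E (\<lambda>s. s\<^sup>2)"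
    using moment(1)[of 1] moment(1)[of 2] by simp_all
  have mean: "integral\<^sup>L ?E (\<lambda>s. s) = 1" using moment(2)[of 1] by simp
  show "holding_excess \<in> borel_measurable step_space"
    using measurable_compose[OF snd_meas, of "\<lambda>s. s - 1"] by (simp add: holding_excess_def[abs_def])
  have "(\<lambda>s::real. (s - 1)\<^sup>2) = (\<lambda>s. s\<^sup>2 - 2 * s + 1)" by (auto simp: power2_eq_square algebra_simps)
  then have "integrable ?E (\<lambda>s::real. (s - 1)\<^sup>2)" using int1 int2 by simp
  then show "integrable step_space (\<lambda>x. (holding_excess x)\<^sup>2)"
    using integrable_distr_eq[OF snd_meas, of "\<lambda>s. (s - 1)\<^sup>2"]
    by (simp add: distr_snd holding_excess_def[abs_def])
  have "integral\<^sup>L ?E (\<lambda>s. s - 1) = 0"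
    using int1 mean E.prob_space by (simp add: Bochner_Integration.integral_diff)
  then show "integral\<^sup>L step_space holding_excess = 0"
    using integral_distr[OF snd_meas, of "\<lambda>s. s - 1"]
    by (simp add: distr_snd holding_excess_def[abs_def])
qed

lemma negative_holding_time_null:
  defines "Z \<equiv> {\<omega> \<in> space hp_space. \<not> (\<forall>j. 0 \<le> snd (\<omega> j))}"
  shows "Z \<in> sets hp_space" and "measure hp_space Z = 0"
proof -
  interpret product_prob_space "\<lambda>_::nat. step_space" UNIV by (rule product_prob_space_steps)
  have "(\<lambda>\<omega>. holding_excess (\<omega> j) + 1) \<in> borel_measurable hp_space" for j
    by (intro borel_measurable_add measurable_compose[OF measurable_hp_space_component
        holding_excess_moments(1)]) simp
  then have [measurable]: "(\<lambda>\<omega>. snd (\<omega> j)) \<in> borel_measurable hp_space" for j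
    by (simp add: holding_excess_def)
  show Z: "Z \<in> sets hp_space" unfolding Z_def by measurable
  have "AE x in distr step_space (density lborel (exponential_density 1)) snd. 0 \<le> x"
    unfolding step_space_def
    by (subst distr_pair_snd[OF prob_space_measure_pmf prob_space_exponential_density])
      (auto simp: AE_density exponential_density_def)
  moreover have "snd \<in> measurable step_space (density lborel (exponential_density 1))"
    unfolding step_space_def by (rule measurable_snd)
  ultimately have "AE x in step_space. 0 \<le> snd x"
    by (blast intro: AE_distrD)
  then have "AE \<omega> in hp_space. \<forall>j. 0 \<le> snd (\<omega> j)"
    unfolding hp_space_def by (subst AE_all_countable) (auto intro!: AE_component)
  then show "measure hp_space Z = 0"
    using AE_iff_measurable[OF Z] by (simp add: Z_def measure_def)
qed

lemma partial_sum_grid_bound: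
  fixes x :: "nat \<Rightarrow> real" and a :: real and g I n :: nat
  assumes lower: "\<And>j. -1 \<le> x j" and "0 < g" and "n < I * g"
    and grid: "\<And>i. i \<le> I \<Longrightarrow> \<bar>\<Sum>j<i * g. x j\<bar> \<le> a"
  shows "\<bar>\<Sum>j<n. x j\<bar> \<le> a + real g"
proof -
  \<comment> \<open>\<open>x \<ge> -1\<close> makes \<open>k \<mapsto> (\<Sum>j<k. x j) + k\<close> monotone, so the sums between two grid points
    are controlled by the sums at the grid points\<close>
  have drop: "(\<Sum>j<m. x j) - real (k - m) \<le> (\<Sum>j<k. x j)" if "m \<le> k" for m k
    using that
  proof (induction k rule: dec_induct)
    case (step k)
    then show ?case using lower[of k] by (simp add: Suc_diff_le)
  qed simp
  define i where "i = n div g"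
  have n_eq: "n = i * g + n mod g" by (simp add: i_def)
  have "n mod g < g" using \<open>0 < g\<close> by simp
  have "i < I"
  proof (rule ccontr)
    assume "\<not> i < I"
    then have "I * g \<le> i * g" by simp
    then show False using \<open>n < I * g\<close> n_eq by linarith
  qed
  then have "\<bar>\<Sum>j<i * g. x j\<bar> \<le> a" "\<bar>\<Sum>j<Suc i * g. x j\<bar> \<le> a"
    using grid[of i] grid[of "Suc i"] by simp_all
  moreover have "i * g \<le> n" "n \<le> Suc i * g" using n_eq \<open>n mod g < g\<close> by simp_all
  moreover have "n - i * g \<le> g" "Suc i * g - n \<le> g"
    using n_eq \<open>n mod g < g\<close> mult_Suc[of i g] by linarith+
  then have "real (n - i * g) \<le> real g" "real (Suc i * g - n) \<le> real g"
    by (simp_all only: of_nat_le_iff)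
  ultimately show ?thesis
    using drop[of "i * g" n] drop[of n "Suc i * g"] by linarith
qed

lemma grid_parameters:
  fixes c \<delta> :: real and R N :: nat
  assumes "0 < \<delta>" "0 \<le> c" "0 < R" "2 / \<delta> \<le> real R" "2 * R \<le> N"
  defines "g \<equiv> N div R" and "I \<equiv> nat \<lfloor>c * real N\<rfloor> div (N div R) + 1"
  shows "0 < g" "real g \<le> \<delta> * real N / 2" "nat \<lfloor>c * real N\<rfloor> < I * g"
    "real (I * g) \<le> (c + 1) * real N" "real I \<le> 2 * real R * c + 1"
proof -
  let ?M = "nat \<lfloor>c * real N\<rfloor>"
  have "real N > 0" using assms by simp
  show "0 < g" using assms by (simp add: g_def div_greater_zero_iff)
  have "2 \<le> \<delta> * real R" using assms by (simp add: field_simps)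
  then have "real N * 2 \<le> real N * (\<delta> * real R)" by (intro mult_left_mono) auto
  then have "real N / real R \<le> \<delta> * real N / 2" using assms by (simp add: field_simps)
  moreover have "real g \<le> real N / real R" unfolding g_def by (rule of_nat_div_le_of_nat)
  ultimately show "real g \<le> \<delta> * real N / 2" by linarith
  have "N = g * R + N mod R" "N mod R < R" "(g + 1) * R = g * R + R"
    using assms by (simp_all add: g_def)
  then have "N < (g + 1) * R" by linarith
  then have "real N < (real g + 1) * real R"
    by (metis of_nat_add of_nat_1 of_nat_less_iff of_nat_mult)
  moreover have "real N / (2 * real R) \<le> real N / real R - 1"
    using assms by (simp add: field_simps)
  ultimately have g_ge: "real N / (2 * real R) \<le> real g"
    using assms by (simp add: field_simps)
  have "?M = ?M div g * g + ?M mod g" "?M mod g < g" "I * g = ?M div g * g + g"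
    using \<open>0 < g\<close> by (simp_all add: I_def g_def algebra_simps)
  then show "?M < I * g" by linarith
  have "I * g \<le> ?M + N"
    unfolding \<open>I * g = ?M div g * g + g\<close>
    by (intro add_mono div_times_less_eq_dividend) (simp add: g_def)
  then have "real (I * g) \<le> real ?M + real N" by (simp only: of_nat_le_iff of_nat_add[symmetric])
  moreover have "real ?M \<le> c * real N" using assms by simp
  ultimately show "real (I * g) \<le> (c + 1) * real N" by (simp add: algebra_simps)
  have "real (?M div g) \<le> real ?M / real g" by (rule of_nat_div_le_of_nat)
  also have "\<dots> \<le> (c * real N) / (real N / (2 * real R))"
    using g_ge \<open>0 < g\<close> \<open>real N > 0\<close> assms by (intro frac_le) auto
  also have "\<dots> = 2 * real R * c" using \<open>real N > 0\<close> by (simp add: field_simps)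
  finally show "real I \<le> 2 * real R * c + 1" by (simp add: I_def g_def)
qed

lemma partial_sums_deviation:
  fixes f :: "bool \<times> real \<Rightarrow> real" and c \<delta> :: real
  assumes f: "f \<in> borel_measurable step_space" "integrable step_space (\<lambda>x. (f x)\<^sup>2)"
      "integral\<^sup>L step_space f = 0"
    and "0 < \<delta>" "0 \<le> c"
  shows "\<exists>A. (\<forall>N. A N \<in> sets hp_space) \<and> (\<lambda>N. measure hp_space (A N)) \<longlonglongrightarrow> 0 \<and>
    (\<forall>\<^sub>F N in sequentially. \<forall>\<omega>\<in>space hp_space - A N. (\<forall>j. -1 \<le> f (\<omega> j)) \<longrightarrow>
      (\<forall>n. real n \<le> c * real N \<longrightarrow> \<bar>\<Sum>j<n. f (\<omega> j)\<bar> \<le> \<delta> * real N))"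
proof -
  \<comment> \<open>a grid of mesh \<open>N div R\<close> up to \<open>c N\<close> has boundedly many points\<close>
  define V where "V = integral\<^sup>L step_space (\<lambda>x. (f x)\<^sup>2)"
  define R :: nat where "R = nat \<lceil>2 / \<delta>\<rceil> + 1"
  define g where "g N = N div R" for N
  define I where "I N = nat \<lfloor>c * real N\<rfloor> div g N + 1" for N
  define A where "A N = grid_deviation_event f (\<delta> * real N / 2) (g N) (I N)" for N
  have "R > 0" "2 / \<delta> \<le> real R" unfolding R_def by linarith+
  have grid: "0 < g N" "real (g N) \<le> \<delta> * real N / 2" "nat \<lfloor>c * real N\<rfloor> < I N * g N"
    "real (I N * g N) \<le> (c + 1) * real N" "real (I N) \<le> 2 * real R * c + 1" if "2 * R \<le> N" for N
    using grid_parameters[OF \<open>0 < \<delta>\<close> \<open>0 \<le> c\<close> \<open>R > 0\<close> \<open>2 / \<delta> \<le> real R\<close> that]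
    unfolding g_def I_def by simp_all
  define C where "C = (2 * real R * c + 2) * (4 * (c + 1) * V / \<delta>\<^sup>2)"
  have "measure hp_space (A N) \<le> C / real N" if "2 * R \<le> N" for N
  proof -
    have "real N > 0" using that \<open>R > 0\<close> by simp
    have "measure hp_space (A N) \<le> real (Suc (I N)) * (real (I N * g N) * V / (\<delta> * real N / 2)\<^sup>2)"
      unfolding A_def V_def
      by (rule measure_grid_deviation_event_le[OF f]) (use \<open>real N > 0\<close> \<open>0 < \<delta>\<close> in simp)
    also have "\<dots> \<le> (2 * real R * c + 2) * ((c + 1) * real N * V / (\<delta> * real N / 2)\<^sup>2)"
      using grid(4,5)[OF that] \<open>0 \<le> c\<close> by (intro mult_mono divide_right_mono mult_right_mono) (auto simp: V_def)
    also have "\<dots> = C / real N"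
      using \<open>real N > 0\<close> \<open>0 < \<delta>\<close> by (simp add: C_def field_simps power2_eq_square)
    finally show ?thesis .
  qed
  then have "(\<lambda>N. measure hp_space (A N)) \<longlonglongrightarrow> 0"
    by (intro tendsto_sandwich[OF _ _ tendsto_const lim_const_over_n[of C]])
      (auto simp: eventually_sequentially)
  moreover have "\<forall>\<^sub>F N in sequentially. \<forall>\<omega>\<in>space hp_space - A N. (\<forall>j. -1 \<le> f (\<omega> j)) \<longrightarrow>
      (\<forall>n. real n \<le> c * real N \<longrightarrow> \<bar>\<Sum>j<n. f (\<omega> j)\<bar> \<le> \<delta> * real N)"
    using eventually_ge_at_top[of "2 * R"]
  proof eventually_elim
    case (elim N)
    show ?case
    proof (intro ballI impI allI)
      fix \<omega> n assume \<omega>: "\<omega> \<in> space hp_space - A N" and "\<forall>j. -1 \<le> f (\<omega> j)"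
        and "real n \<le> c * real N"
      have "n \<le> nat \<lfloor>c * real N\<rfloor>"
        using \<open>real n \<le> c * real N\<close> by (simp add: le_nat_iff le_floor_iff)
      then have "n < I N * g N" using grid(3)[OF elim] by linarith
      moreover have "\<bar>\<Sum>j<i * g N. f (\<omega> j)\<bar> \<le> \<delta> * real N / 2" if "i \<le> I N" for i
        using \<omega> that by (force simp: A_def grid_deviation_event_def)
      ultimately have "\<bar>\<Sum>j<n. f (\<omega> j)\<bar> \<le> \<delta> * real N / 2 + real (g N)"
        using \<open>\<forall>j. -1 \<le> f (\<omega> j)\<close> grid(1)[OF elim] by (intro partial_sum_grid_bound) auto
      then show "\<bar>\<Sum>j<n. f (\<omega> j)\<bar> \<le> \<delta> * real N" using grid(2)[OF elim] by linarith
    qed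
  qed
  moreover have "\<forall>N. A N \<in> sets hp_space" using grid_deviation_event_sets[OF f] by (simp add: A_def)
  ultimately show ?thesis by blast
qed

lemma typical_path_prob:
  fixes c \<delta> :: real
  assumes "0 < \<delta>" "0 \<le> c"
  shows "\<exists>A. (\<forall>N. A N \<in> sets hp_space) \<and> (\<lambda>N. measure hp_space (A N)) \<longlonglongrightarrow> 0 \<and>
    (\<forall>\<^sub>F N in sequentially. \<forall>\<omega>\<in>space hp_space - A N. typical_path c \<delta> N \<omega>)"
proof -
  define Z where "Z = {\<omega> \<in> space hp_space. \<not> (\<forall>j. 0 \<le> snd (\<omega> j))}"
  obtain A1 where A1: "\<forall>N. A1 N \<in> sets hp_space" "(\<lambda>N. measure hp_space (A1 N)) \<longlonglongrightarrow> 0"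
    "\<forall>\<^sub>F N in sequentially. \<forall>\<omega>\<in>space hp_space - A1 N. (\<forall>j. -1 \<le> coin_value (\<omega> j)) \<longrightarrow>
      (\<forall>n. real n \<le> c * real N \<longrightarrow> \<bar>\<Sum>j<n. coin_value (\<omega> j)\<bar> \<le> \<delta> * real N)"
    using partial_sums_deviation[OF coin_value_moments(1-3) assms] by blast
  obtain A2 where A2: "\<forall>N. A2 N \<in> sets hp_space" "(\<lambda>N. measure hp_space (A2 N)) \<longlonglongrightarrow> 0"
    "\<forall>\<^sub>F N in sequentially. \<forall>\<omega>\<in>space hp_space - A2 N. (\<forall>j. -1 \<le> holding_excess (\<omega> j)) \<longrightarrow>
      (\<forall>n. real n \<le> c * real N \<longrightarrow> \<bar>\<Sum>j<n. holding_excess (\<omega> j)\<bar> \<le> \<delta> * real N)"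
    using partial_sums_deviation[OF holding_excess_moments assms] by blast
  define A where "A N = Z \<union> A1 N \<union> A2 N" for N
  have sets: "A N \<in> sets hp_space" for N
    using A1(1) A2(1) negative_holding_time_null(1) by (simp add: A_def Z_def)
  have "(\<lambda>N. measure hp_space (A N)) \<longlonglongrightarrow> 0"
  proof (rule tendsto_sandwich[OF _ _ tendsto_const tendsto_add_zero[OF A1(2) A2(2)]])
    show "\<forall>\<^sub>F N in sequentially. measure hp_space (A N)
        \<le> measure hp_space (A1 N) + measure hp_space (A2 N)"
    proof (intro always_eventually allI)
      fix N
      have "measure hp_space (A N) \<le> measure hp_space Z + measure hp_space (A1 N \<union> A2 N)"
        unfolding A_def Un_assoc
        using A1(1) A2(1) negative_holding_time_null(1) by (intro measure_Un_le) (auto simp: Z_def)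
      also have "\<dots> \<le> measure hp_space (A1 N) + measure hp_space (A2 N)"
        using measure_Un_le[of "A1 N" hp_space "A2 N"] A1(1) A2(1) negative_holding_time_null(2)
        by (simp add: Z_def)
      finally show "measure hp_space (A N) \<le> measure hp_space (A1 N) + measure hp_space (A2 N)" .
    qed
  qed simp
  moreover have "\<forall>\<^sub>F N in sequentially. \<forall>\<omega>\<in>space hp_space - A N. typical_path c \<delta> N \<omega>"
    using A1(3) A2(3)
    by eventually_elim (auto simp: A_def Z_def typical_path_def coin_value_def holding_excess_def)
  ultimately show ?thesis using sets by blast
qed

section \<open>Convergence in probability\<close>

lemma (in hutchinson_solution) Yproc_converges_in_probability:
  assumes "0 < T" "T + \<tau> + 1 < Tm" "\<mu> > 0" "\<epsilon> > 0"
  shows "\<exists>A :: nat \<Rightarrow> (nat \<Rightarrow> bool \<times> real) set.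
    (\<forall>N\<ge>1. A N \<in> sets hp_space \<and>
      {\<omega> \<in> space hp_space. skorokhod_dist (-\<tau>) T (Yproc \<tau> \<mu> N \<omega>) u > ereal \<epsilon>} \<subseteq> A N) \<and>
    (\<lambda>N. measure hp_space (A N)) \<longlonglongrightarrow> 0"
proof -
  define T1 where "T1 = T + \<tau> + 1"
  have "0 \<le> T1" using assms tau_pos by (simp add: T1_def)
  then obtain B \<Lambda> K where "solution_estimates \<mu> \<tau> u B \<Lambda> K T1"
    using solution_estimates_exist[OF \<open>0 \<le> T1\<close>] assms(2) by (auto simp: T1_def)
  then obtain \<delta> where "\<delta> > 0" and close: "\<forall>\<^sub>F N in sequentially. \<forall>\<omega>. typical_path T1 \<delta> N \<omega> \<longrightarrow>
      (\<forall>t\<in>{-\<tau>..T}. \<bar>Yproc \<tau> \<mu> N \<omega> t - u t\<bar> \<le> \<epsilon>)"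
    using solution_estimates.Yproc_eventually_close[OF _ T1_def] assms by blast
  obtain A where A_sets: "\<forall>N. A N \<in> sets hp_space" and A_lim: "(\<lambda>N. measure hp_space (A N)) \<longlonglongrightarrow> 0"
    and typical: "\<forall>\<^sub>F N in sequentially. \<forall>\<omega>\<in>space hp_space - A N. typical_path T1 \<delta> N \<omega>"
    using typical_path_prob[OF \<open>\<delta> > 0\<close> \<open>0 \<le> T1\<close>] by blast
  obtain N0 where N0: "\<And>N. N \<ge> N0 \<Longrightarrow> \<forall>\<omega>\<in>space hp_space - A N.
      \<forall>t\<in>{-\<tau>..T}. \<bar>Yproc \<tau> \<mu> N \<omega> t - u t\<bar> \<le> \<epsilon>"
    using eventually_conj[OF close typical] by (auto simp: eventually_sequentially)
  define A' where "A' N = (if N0 \<le> N then A N else space hp_space)" for N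
  show ?thesis
  proof (intro exI[of _ A'] conjI allI impI)
    fix N :: nat
    show "A' N \<in> sets hp_space" using A_sets by (simp add: A'_def)
    show "{\<omega> \<in> space hp_space. skorokhod_dist (-\<tau>) T (Yproc \<tau> \<mu> N \<omega>) u > ereal \<epsilon>} \<subseteq> A' N"
    proof (clarify)
      fix \<omega> assume \<omega>: "\<omega> \<in> space hp_space" "skorokhod_dist (-\<tau>) T (Yproc \<tau> \<mu> N \<omega>) u > ereal \<epsilon>"
      show "\<omega> \<in> A' N"
      proof (rule ccontr)
        assume "\<omega> \<notin> A' N"
        then have "\<forall>t\<in>{-\<tau>..T}. \<bar>Yproc \<tau> \<mu> N \<omega> t - u t\<bar> \<le> \<epsilon>"
          using N0[of N] \<omega>(1) by (auto simp: A'_def split: if_splits)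
        then have "skorokhod_dist (-\<tau>) T (Yproc \<tau> \<mu> N \<omega>) u \<le> ereal \<epsilon>"
          using assms tau_pos by (intro skorokhod_dist_le_sup) auto
        then show False using \<omega>(2) by simp
      qed
    qed
  next
    have "\<forall>\<^sub>F N in sequentially. measure hp_space (A N) = measure hp_space (A' N)"
      using eventually_ge_at_top[of N0] by eventually_elim (simp add: A'_def)
    then show "(\<lambda>N. measure hp_space (A' N)) \<longlonglongrightarrow> 0"
      by (rule Lim_transform_eventually[OF A_lim])
  qed
qed

theorem theorem2p1:
  fixes \<tau> \<mu> T :: real
  assumes "\<tau> > 0" and "0 < \<mu>" and "\<mu> < 1" and "T > 0"
  shows "\<exists>u. hutchinson_sol \<tau> \<mu> T u \<and>
           (\<forall>v. hutchinson_sol \<tau> \<mu> T v \<longrightarrow> (\<forall>t\<in>{-\<tau>..T}. v t = u t)) \<and>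
           (\<forall>\<epsilon>>0. \<exists>A :: nat \<Rightarrow> (nat \<Rightarrow> bool \<times> real) set.
              (\<forall>N\<ge>1. A N \<in> sets hp_space \<and>
                 {\<omega> \<in> space hp_space. skorokhod_dist (-\<tau>) T (Yproc \<tau> \<mu> N \<omega>) u > ereal \<epsilon>} \<subseteq> A N) \<and>
              (\<lambda>N. measure hp_space (A N)) \<longlonglongrightarrow> 0)"
proof -
  obtain u where "hutchinson_solution \<tau> \<mu> (T + \<tau> + 2) u"
    using hutchinson_solution_exists[OF \<open>\<tau> > 0\<close>] by blast
  then interpret hutchinson_solution \<tau> \<mu> "T + \<tau> + 2" u .
  have "T < T + \<tau> + 2" using \<open>\<tau> > 0\<close> by simp
  moreover have "T + \<tau> + 1 < T + \<tau> + 2" by simp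
  ultimately show ?thesis
    using hutchinson_sol[OF \<open>T > 0\<close>] hutchinson_sol_unique
      Yproc_converges_in_probability[OF \<open>T > 0\<close> _ \<open>0 < \<mu>\<close>]
    by blast
qed

end
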